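(* Let $\Bbbk$ be a field of characteristic zero and let $\mathbf{M},\mathbf{s},c_L,c_M\in\Bbbk$. The massive module $\widetilde{V}(\mathbf{M},\mathbf{s},c_L,c_M)$ over the BMS$_3$ algebra is irreducible if and only if $\mathbf{M}+\frac{n^2-1}{24}c_M\neq 0$ for every positive integer $n$.
   Context: The BMS$_3$ algebra $\mathfrak{bms}$ over $\Bbbk$ has basis $\{L_n,M_n\mid n\in\mathbb{Z}\}\cup\{C_L,C_M\}$, with $C_L,C_M$ central and brackets $[L_n,L_m]=(n-m)L_{n+m}+\frac1{12}n(n^2-1)\delta_{m,-n}C_L$, $[L_n,M_m]=(n-m)M_{n+m}+\frac1{12}n(n^2-1)\delta_{m,-n}C_M$, $[M_n,M_m]=0$. Let $\widehat{\mathfrak h}$ be the subalgebra spanned by $\{M_n\mid n\in\mathbb{Z}\}\cup\{L_0,C_L,C_M\}$, and let $\Bbbk|\mathbf{M},\mathbf{s}\rangle$ be the one-dimensional $\widehat{\mathfrak h}$-module with $L_0$ acting by $\mathbf{s}$, $M_0$ by $\mathbf{M}$, $C_L$ by $c_L$, $C_M$ by $c_M$, and $M_n$ by $0$ for $n\neq 0$. The massive module is $\widetilde V(\mathbf{M},\mathbf{s},c_L,c_M)=\mathrm{Ind}_{\widehat{\mathfrak h}}^{\mathfrak{bms}}\Bbbk|\mathbf{M},\mathbf{s}\rangle$. *)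

theory Defs
  imports Main
begin

datatype gen = L int | M int | CL | CM

text \<open>Elements of the tensor algebra T(bms) over the field: functions from words
  (lists of generators; the word [g1,...,gk] stands for g1 g2 ... gk) to coefficients,
  with finite support.\<close>
definition Tens :: "(gen list \<Rightarrow> 'a::field) set" where
  "Tens = {f. finite {w. f w \<noteq> 0}}"

definition sgl :: "gen list \<Rightarrow> 'a::field \<Rightarrow> gen list \<Rightarrow> 'a" where
  "sgl w c = (\<lambda>v. if v = w then c else 0)"

definition lmul :: "gen \<Rightarrow> (gen list \<Rightarrow> 'a::field) \<Rightarrow> gen list \<Rightarrow> 'a" where
  "lmul g f = (\<lambda>v. case v of [] \<Rightarrow> 0 | g' # v' \<Rightarrow> if g' = g then f v' else 0)"

text \<open>Lie bracket [x,y] of generators, as a list of (generator, coefficient).\<close>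
fun brkc :: "gen \<Rightarrow> gen \<Rightarrow> (gen \<times> 'a::field) list" where
  "brkc (L n) (L m) = [(L (n + m), of_int (n - m))]
      @ (if m = - n then [(CL, of_int (n ^ 3 - n) / 12)] else [])"
| "brkc (L n) (M m) = [(M (n + m), of_int (n - m))]
      @ (if m = - n then [(CM, of_int (n ^ 3 - n) / 12)] else [])"
| "brkc (M m) (L n) = [(M (n + m), - of_int (n - m))]
      @ (if m = - n then [(CM, - (of_int (n ^ 3 - n) / 12))] else [])"
| "brkc _ _ = []"

definition rel_comm :: "gen list \<Rightarrow> gen \<Rightarrow> gen \<Rightarrow> gen list \<Rightarrow> gen list \<Rightarrow> 'a::field" where
  "rel_comm u x y w = (\<lambda>v. sgl (u @ [x, y] @ w) 1 v - sgl (u @ [y, x] @ w) 1 v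
      - sum_list (map (\<lambda>(g, c). sgl (u @ [g] @ w) c v) (brkc x y)))"

text \<open>The character of \<open>\<widehat>h\<close> on the one-dimensional module: defined (Some) exactly on
  the basis elements M_n, L_0, C_L, C_M of \<open>\<widehat>h\<close>.\<close>
fun chi :: "'a \<Rightarrow> 'a \<Rightarrow> 'a \<Rightarrow> 'a \<Rightarrow> gen \<Rightarrow> ('a::field) option" where
  "chi Mv s cL cM (L n) = (if n = 0 then Some s else None)"
| "chi Mv s cL cM (M n) = Some (if n = 0 then Mv else 0)"
| "chi Mv s cL cM CL = Some cL"
| "chi Mv s cL cM CM = Some cM"

inductive_set spanS :: "('b \<Rightarrow> 'a::field) set \<Rightarrow> ('b \<Rightarrow> 'a) set" for S where
  zero: "(\<lambda>_. 0) \<in> spanS S"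
| base: "f \<in> S \<Longrightarrow> f \<in> spanS S"
| add: "f \<in> spanS S \<Longrightarrow> g \<in> spanS S \<Longrightarrow> (\<lambda>v. f v + g v) \<in> spanS S"
| smul: "f \<in> spanS S \<Longrightarrow> (\<lambda>v. c * f v) \<in> spanS S"

text \<open>Kernel of T(bms) \<rightarrow> U(bms) \<otimes>_{U(\<widehat>h)} k|M,s>: spanned by the two-sided
  commutator relations and the left ideal generated by h - chi(h), h in \<open>\<widehat>h\<close>.\<close>
definition Nsub :: "'a \<Rightarrow> 'a \<Rightarrow> 'a \<Rightarrow> 'a \<Rightarrow> (gen list \<Rightarrow> 'a::field) set" where
  "Nsub Mv s cL cM = spanS
     ({rel_comm u x y w | u x y w. True}
      \<union> {(\<lambda>v. sgl (u @ [h]) 1 v - sgl u c v) | u h c. chi Mv s cL cM h = Some c})"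

text \<open>The massive module is Tens / Nsub. Its submodules correspond to subspaces W with
  Nsub \<subseteq> W \<subseteq> Tens closed under left multiplication by generators.\<close>
definition massive_irreducible :: "'a \<Rightarrow> 'a \<Rightarrow> 'a \<Rightarrow> 'a::field \<Rightarrow> bool" where
  "massive_irreducible Mv s cL cM \<longleftrightarrow>
     Nsub Mv s cL cM \<noteq> Tens \<and>
     (\<forall>W. Nsub Mv s cL cM \<subseteq> W \<and> W \<subseteq> Tens
        \<and> (\<forall>f\<in>W. \<forall>g\<in>W. (\<lambda>v. f v + g v) \<in> W)
        \<and> (\<forall>f\<in>W. \<forall>c. (\<lambda>v. c * f v) \<in> W)
        \<and> (\<forall>f\<in>W. \<forall>x. lmul x f \<in> W)
        \<longrightarrow> W = Nsub Mv s cL cM \<or> W = Tens)"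

end

(*
  The induced modules are described by an explicit PBW basis.  For a character of a subalgebra
  spanned by generators, containing all generators except some L_i, the action of a generator
  on the ordered monomials L_i1 ... L_ik |M,s> (i1 <= ... <= ik) is defined by recursion on
  the length, and the commutation relations are checked by induction on the length using the
  Jacobi identity.  So the tensor algebra modulo the defining relations is the span of the
  ordered monomials, and membership in the kernel is decided by a normal form.

  On the massive module, M_(-i) removes a factor L_i from an ordered monomial, modulo shorter
  monomials, with coefficient -2i (M + (i^2 - 1)/24 c_M) times the multiplicity of L_i.  If
  these coefficients never vanish, applying M's to any element outside the kernel reaches a
  nonzero multiple of the vacuum, so the only submodules are trivial.  If
  M + (n^2 - 1)/24 c_M = 0 for some n > 0, then [L_n, M_(-n)] kills the vacuum, the character
  extends by L_n |-> 0, and the module induced from the larger subalgebra is a proper nonzero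
  quotient of the massive module.
*)
theory Submission
  imports Defs "HOL-Library.Function_Algebras" "HOL-Library.Multiset"
begin

section \<open>Finitely supported functions\<close>

definition supp :: "('b \<Rightarrow> 'a::zero) \<Rightarrow> 'b set" where
  "supp F = {v. F v \<noteq> 0}"

definition fin_supp :: "('b \<Rightarrow> 'a::zero) \<Rightarrow> bool" where
  "fin_supp F \<longleftrightarrow> finite (supp F)"

definition fscale :: "'a::times \<Rightarrow> ('b \<Rightarrow> 'a) \<Rightarrow> 'b \<Rightarrow> 'a" where
  "fscale a F = (\<lambda>v. a * F v)"

text \<open>Finitely supported functions on words are the vectors of \<open>T(bms)\<close> in the basis of words
  \<open>sgl w 1\<close>; \<open>lin_ext G\<close> is the linear map sending the basis vector \<open>sgl w 1\<close> to \<open>G w\<close>.\<close>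
definition lin_ext :: "('b \<Rightarrow> 'c \<Rightarrow> 'a::field) \<Rightarrow> ('b \<Rightarrow> 'a) \<Rightarrow> 'c \<Rightarrow> 'a" where
  "lin_ext G F = (\<lambda>v. \<Sum>\<rho>\<in>supp F. F \<rho> * G \<rho> v)"

lemma supp_iff [simp]: "v \<in> supp F \<longleftrightarrow> F v \<noteq> 0"
  by (simp add: supp_def)

lemma fscale_apply [simp]: "fscale a F v = a * F v"
  by (simp add: fscale_def)

lemma fscale_one [simp]: "fscale (1::'a::monoid_mult) F = F"
  unfolding fscale_def by simp

lemma Tens_iff_fin_supp: "f \<in> Tens \<longleftrightarrow> fin_supp f"
  by (simp add: Tens_def fin_supp_def supp_def)

lemma fin_supp_zero [simp]: "fin_supp 0"
  by (simp add: fin_supp_def supp_def)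

lemma fin_supp_add: "fin_supp F \<Longrightarrow> fin_supp G \<Longrightarrow> fin_supp (F + G :: 'b \<Rightarrow> 'a::monoid_add)"
  unfolding fin_supp_def by (rule finite_subset[of _ "supp F \<union> supp G"]) auto

lemma fin_supp_uminus: "fin_supp F \<Longrightarrow> fin_supp (- F :: 'b \<Rightarrow> 'a::group_add)"
  unfolding fin_supp_def by (rule finite_subset[of _ "supp F"]) auto

lemma fin_supp_diff: "fin_supp F \<Longrightarrow> fin_supp G \<Longrightarrow> fin_supp (F - G :: 'b \<Rightarrow> 'a::group_add)"
  unfolding fin_supp_def by (rule finite_subset[of _ "supp F \<union> supp G"]) auto

lemma fin_supp_fscale: "fin_supp F \<Longrightarrow> fin_supp (fscale a F :: 'b \<Rightarrow> 'a::mult_zero)"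
  unfolding fin_supp_def by (rule finite_subset[of _ "supp F"]) auto

lemma sgl_neq_zeroD: "sgl w a v \<noteq> 0 \<Longrightarrow> v = w"
  by (simp add: sgl_def split: if_splits)

lemma sgl_one_neq_zero: "sgl w (1::'a::field) \<noteq> 0"
proof
  assume "sgl w (1::'a) = 0"
  then have "sgl w (1::'a) w = (0 :: gen list \<Rightarrow> 'a) w" by (rule fun_cong)
  then show False by (simp add: sgl_def)
qed

lemma fin_supp_sgl [simp]: "fin_supp (sgl w a)"
  unfolding fin_supp_def by (rule finite_subset[of _ "{w}"]) (auto simp: sgl_def split: if_splits)

lemma supp_lin_ext:
  assumes "v \<in> supp (lin_ext G F)"
  shows "\<exists>\<rho>\<in>supp F. v \<in> supp (G \<rho>)"
proof -
  have "(\<Sum>\<rho>\<in>supp F. F \<rho> * G \<rho> v) \<noteq> 0" using assms by (simp add: lin_ext_def)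
  then obtain \<rho> where "\<rho> \<in> supp F" "F \<rho> * G \<rho> v \<noteq> 0"
    by (rule sum.not_neutral_contains_not_neutral)
  then show ?thesis by auto
qed

lemma fin_supp_lin_ext:
  assumes "fin_supp F" and "\<And>\<rho>. \<rho> \<in> supp F \<Longrightarrow> fin_supp (G \<rho>)"
  shows "fin_supp (lin_ext G F)"
  unfolding fin_supp_def
proof (rule finite_subset)
  show "supp (lin_ext G F) \<subseteq> (\<Union>\<rho>\<in>supp F. supp (G \<rho>))"
    using supp_lin_ext by fast
  show "finite (\<Union>\<rho>\<in>supp F. supp (G \<rho>))"
    using assms by (auto simp: fin_supp_def)
qed

lemma lin_ext_eq_sum:
  "finite S \<Longrightarrow> supp F \<subseteq> S \<Longrightarrow> lin_ext G F = (\<lambda>v. \<Sum>\<rho>\<in>S. F \<rho> * G \<rho> v)"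
  unfolding lin_ext_def by (rule ext, rule sum.mono_neutral_left) auto

lemma lin_ext_cong: "(\<And>\<rho>. F \<rho> \<noteq> 0 \<Longrightarrow> G1 \<rho> = G2 \<rho>) \<Longrightarrow> lin_ext G1 F = lin_ext G2 F"
  unfolding lin_ext_def by (auto intro!: sum.cong)

lemma lin_ext_zero [simp]: "lin_ext G 0 = 0"
  by (simp add: lin_ext_def supp_def fun_eq_iff)

lemma lin_ext_add:
  assumes "fin_supp F1" and "fin_supp F2"
  shows "lin_ext G (F1 + F2) = lin_ext G F1 + lin_ext G F2"
proof -
  let ?S = "supp F1 \<union> supp F2"
  have S: "finite ?S" using assms by (auto simp: fin_supp_def)
  have "lin_ext G F = (\<lambda>v. \<Sum>\<rho>\<in>?S. F \<rho> * G \<rho> v)" if "F \<in> {F1, F2, F1 + F2}" for F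
    using that by (intro lin_ext_eq_sum[OF S]) auto
  then show ?thesis
    by (simp add: fun_eq_iff distrib_right sum.distrib)
qed

lemma lin_ext_fscale: "lin_ext G (fscale a F) = fscale a (lin_ext G F)"
proof (cases "a = 0")
  case False
  then have "supp (fscale a F) = supp F" by auto
  then show ?thesis by (simp add: lin_ext_def fun_eq_iff sum_distrib_left mult.assoc)
qed (simp add: lin_ext_def supp_def fun_eq_iff)

lemma lin_ext_uminus: "lin_ext G (- F) = - lin_ext G F"
proof -
  have "supp (- F) = supp F" by auto
  then show ?thesis by (simp add: lin_ext_def fun_eq_iff sum_negf)
qed

lemma lin_ext_diff:
  "fin_supp F1 \<Longrightarrow> fin_supp F2 \<Longrightarrow> lin_ext G (F1 - F2) = lin_ext G F1 - lin_ext G F2"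
  using lin_ext_add[of F1 "- F2" G] by (simp add: lin_ext_uminus fin_supp_uminus)

lemma lin_ext_sgl [simp]: "lin_ext G (sgl w a) = fscale a (G w)"
proof (cases "a = 0")
  case False
  then have "supp (sgl w a) = {w}" by (auto simp: sgl_def split: if_splits)
  then show ?thesis by (simp add: lin_ext_def sgl_def fun_eq_iff)
qed (simp add: lin_ext_def supp_def sgl_def fun_eq_iff)

lemma lin_ext_sgl_one: "lin_ext G (sgl w 1) = G w"
  by (simp add: fscale_def)

lemma lin_ext_sgl_basis:
  assumes "fin_supp F"
  shows "lin_ext (\<lambda>w. sgl w 1) F = F"
proof
  fix v
  have "lin_ext (\<lambda>w. sgl w 1) F v = (\<Sum>\<rho>\<in>supp F. if \<rho> = v then F v else 0)"
    unfolding lin_ext_def by (rule sum.cong) (auto simp: sgl_def)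
  also have "\<dots> = F v"
    using assms by (simp add: fin_supp_def)
  finally show "lin_ext (\<lambda>w. sgl w 1) F v = F v" .
qed

lemma lin_ext_map_add: "lin_ext (\<lambda>\<rho>. G1 \<rho> + G2 \<rho>) F = lin_ext G1 F + lin_ext G2 F"
  by (simp add: lin_ext_def fun_eq_iff distrib_left sum.distrib)

lemma lin_ext_map_diff: "lin_ext (\<lambda>\<rho>. G1 \<rho> - G2 \<rho>) F = lin_ext G1 F - lin_ext G2 F"
  by (simp add: lin_ext_def fun_eq_iff right_diff_distrib sum_subtractf)

lemma lin_ext_map_fscale: "lin_ext (\<lambda>\<rho>. fscale a (G \<rho>)) F = fscale a (lin_ext G F)"
  by (simp add: lin_ext_def fun_eq_iff sum_distrib_left algebra_simps)

lemma lin_ext_map_zero: "lin_ext (\<lambda>_ _. 0) F = (\<lambda>_. 0)"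
  by (simp add: lin_ext_def)

lemma lin_ext_lin_ext:
  assumes F: "fin_supp F" and G: "\<And>\<rho>. \<rho> \<in> supp F \<Longrightarrow> fin_supp (G \<rho>)"
  shows "lin_ext H (lin_ext G F) = lin_ext (\<lambda>\<rho>. lin_ext H (G \<rho>)) F"
proof -
  define S where "S = (\<Union>\<rho>\<in>supp F. supp (G \<rho>))"
  have S: "finite S" using assms by (auto simp: S_def fin_supp_def)
  have supp_GF: "supp (lin_ext G F) \<subseteq> S" using supp_lin_ext[of _ G F] by (auto simp: S_def)
  have H_G: "lin_ext H (G \<rho>) = (\<lambda>v. \<Sum>\<tau>\<in>S. G \<rho> \<tau> * H \<tau> v)" if "\<rho> \<in> supp F" for \<rho>
    by (rule lin_ext_eq_sum[OF S]) (use that in \<open>auto simp: S_def\<close>)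
  have "lin_ext H (lin_ext G F) = (\<lambda>v. \<Sum>\<tau>\<in>S. lin_ext G F \<tau> * H \<tau> v)"
    by (rule lin_ext_eq_sum[OF S supp_GF])
  also have "\<dots> = (\<lambda>v. \<Sum>\<rho>\<in>supp F. F \<rho> * (\<Sum>\<tau>\<in>S. G \<rho> \<tau> * H \<tau> v))"
    by (simp add: lin_ext_def sum_distrib_right sum_distrib_left mult.assoc sum.swap[of _ S])
  also have "\<dots> = lin_ext (\<lambda>\<rho>. lin_ext H (G \<rho>)) F"
    unfolding lin_ext_def[of "\<lambda>\<rho>. lin_ext H (G \<rho>)"] by (rule ext, rule sum.cong) (simp_all add: H_G)
  finally show ?thesis .
qed

definition lin_comb :: "('g \<Rightarrow> 'a::comm_ring_1) \<Rightarrow> ('g \<times> 'a) list \<Rightarrow> 'a" where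
  "lin_comb A xs = (\<Sum>(g, a)\<leftarrow>xs. a * A g)"

definition lin_comb_fun :: "('g \<Rightarrow> 'b \<Rightarrow> 'a::comm_ring_1) \<Rightarrow> ('g \<times> 'a) list \<Rightarrow> 'b \<Rightarrow> 'a" where
  "lin_comb_fun A xs = (\<lambda>v. lin_comb (\<lambda>g. A g v) xs)"

lemma lin_comb_simps [simp]:
  "lin_comb A [] = 0"
  "lin_comb A ((g, a) # xs) = a * A g + lin_comb A xs"
  "lin_comb A (xs @ ys) = lin_comb A xs + lin_comb A ys"
  by (simp_all add: lin_comb_def)

lemma lin_comb_fun_simps [simp]:
  "lin_comb_fun A [] = 0"
  "lin_comb_fun A ((g, a) # xs) = fscale a (A g) + lin_comb_fun A xs"
  "lin_comb_fun A (xs @ ys) = lin_comb_fun A xs + lin_comb_fun A ys"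
  by (auto simp: lin_comb_fun_def)

lemma lin_comb_fun_apply: "lin_comb_fun A xs v = lin_comb (\<lambda>g. A g v) xs"
  by (simp add: lin_comb_fun_def)

lemma lin_comb_cong:
  "(\<And>g a. (g, a) \<in> set xs \<Longrightarrow> a \<noteq> 0 \<Longrightarrow> A g = B g) \<Longrightarrow> lin_comb A xs = lin_comb B xs"
proof (induction xs)
  case (Cons p xs)
  obtain g a where p: "p = (g, a)" by (cases p)
  have "a * A g = a * B g" using Cons.prems[of g a] p by (cases "a = 0") auto
  moreover have "lin_comb A xs = lin_comb B xs" using Cons by auto
  ultimately show ?case by (simp add: p)
qed simp

lemma lin_comb_mult_right: "lin_comb (\<lambda>g. A g * c) xs = lin_comb A xs * c"
  by (induction xs) (auto simp: algebra_simps)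

lemma lin_comb_fun_add: "lin_comb_fun (\<lambda>g. A g + B g) xs = lin_comb_fun A xs + lin_comb_fun B xs"
  by (induction xs) (auto simp: fun_eq_iff algebra_simps)

lemma lin_comb_fun_diff: "lin_comb_fun (\<lambda>g. A g - B g) xs = lin_comb_fun A xs - lin_comb_fun B xs"
  by (induction xs) (auto simp: fun_eq_iff algebra_simps)

lemma supp_lin_comb_fun: "v \<in> supp (lin_comb_fun A xs) \<Longrightarrow> \<exists>(g, a)\<in>set xs. v \<in> supp (A g)"
  by (induction xs) (auto simp: lin_comb_fun_def)

lemma fin_supp_lin_comb_fun:
  "(\<And>g. fin_supp (A g)) \<Longrightarrow> fin_supp (lin_comb_fun A xs :: 'b \<Rightarrow> 'a::field)"
  by (induction xs) (auto intro!: fin_supp_add fin_supp_fscale)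

lemma lin_ext_lin_comb_fun:
  "(\<And>g. fin_supp (A g)) \<Longrightarrow> lin_ext H (lin_comb_fun A xs) = lin_comb_fun (\<lambda>g. lin_ext H (A g)) xs"
  by (induction xs) (auto simp: lin_ext_add lin_ext_fscale fin_supp_lin_comb_fun fin_supp_fscale)

lemma lin_ext_map_lin_comb_fun:
  "lin_ext (\<lambda>\<rho>. lin_comb_fun (\<lambda>g. A g \<rho>) xs) F = lin_comb_fun (\<lambda>g. lin_ext (A g) F) xs"
  by (induction xs) (auto simp: lin_ext_map_add lin_ext_map_fscale lin_ext_map_zero)

lemma lin_comb_brkc_antisym:
  "lin_comb A (brkc x y) = - lin_comb (A :: gen \<Rightarrow> 'a::field_char_0) (brkc y x)"
  by (cases x; cases y) (auto simp: field_simps)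

lemma lin_comb_brkc_jacobi:
  "lin_comb (\<lambda>g. lin_comb A (brkc g y)) (brkc x z) + lin_comb (\<lambda>g. lin_comb A (brkc x g)) (brkc y z)
   = lin_comb (\<lambda>g. lin_comb (A :: gen \<Rightarrow> 'a::field_char_0) (brkc g z)) (brkc x y)"
proof -
  txt \<open>Solving the index constraints of the central terms for one index lets \<open>auto\<close> eliminate it.\<close>
  have solve_index: "a + b = - c \<Longrightarrow> c = - a - b" "- a = b \<Longrightarrow> a = - b" for a b c :: int
    by simp_all
  show ?thesis
    by (cases x; cases y; cases z; auto simp: field_simps dest!: solve_index;
        simp add: power3_eq_cube algebra_simps)
qed

lemma lin_comb_fun_brkc_antisym:
  "lin_comb_fun A (brkc x y) = - lin_comb_fun (A :: gen \<Rightarrow> 'b \<Rightarrow> 'a::field_char_0) (brkc y x)"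
  by (simp add: fun_eq_iff lin_comb_fun_apply lin_comb_brkc_antisym[of _ x y])

lemma lin_comb_fun_brkc_self: "lin_comb_fun (A :: gen \<Rightarrow> 'b \<Rightarrow> 'a::field_char_0) (brkc x x) = 0"
proof -
  have "lin_comb (\<lambda>g. A g v) (brkc x x) = 0" for v
    using lin_comb_brkc_antisym[of "\<lambda>g. A g v" x x] by simp
  then show ?thesis by (simp add: fun_eq_iff lin_comb_fun_apply)
qed

lemma lin_comb_fun_brkc_jacobi:
  "lin_comb_fun (\<lambda>g. lin_comb_fun B (brkc g y)) (brkc x z)
     + lin_comb_fun (\<lambda>g. lin_comb_fun B (brkc x g)) (brkc y z)
   = lin_comb_fun (\<lambda>g. lin_comb_fun (B :: gen \<Rightarrow> 'b \<Rightarrow> 'a::field_char_0) (brkc g z)) (brkc x y)"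
  by (simp add: fun_eq_iff lin_comb_fun_apply lin_comb_brkc_jacobi)

lemma spanS_zero_fun: "0 \<in> spanS S"
  using spanS.zero[of S] by (simp add: zero_fun_def)

lemma spanS_plus: "f \<in> spanS S \<Longrightarrow> g \<in> spanS S \<Longrightarrow> f + g \<in> spanS S"
  using spanS.add[of f S g] by (simp add: plus_fun_def)

lemma spanS_fscale: "f \<in> spanS S \<Longrightarrow> fscale a f \<in> spanS S"
  using spanS.smul[of f S a] by (simp add: fscale_def)

lemma spanS_lin_ext:
  assumes "fin_supp F" and "\<And>\<rho>. F \<rho> \<noteq> 0 \<Longrightarrow> H \<rho> \<in> spanS S"
  shows "lin_ext H F \<in> spanS S"
proof -
  have "(\<lambda>v. \<Sum>\<rho>\<in>R. F \<rho> * H \<rho> v) \<in> spanS S" if "finite R" "R \<subseteq> supp F" for R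
    using that
  proof (induction R rule: finite_induct)
    case (insert \<rho> R)
    then have "fscale (F \<rho>) (H \<rho>) + (\<lambda>v. \<Sum>\<rho>\<in>R. F \<rho> * H \<rho> v) \<in> spanS S"
      using assms(2) by (auto intro!: spanS_plus spanS_fscale)
    then show ?case using insert by (simp add: plus_fun_def)
  qed (simp add: spanS.zero)
  then show ?thesis using assms(1) by (simp add: lin_ext_def fin_supp_def)
qed

lemma spanS_lin_comb_fun: "(\<And>g. A g \<in> spanS S) \<Longrightarrow> lin_comb_fun A xs \<in> spanS S"
  by (induction xs) (auto intro!: spanS_zero_fun spanS_plus spanS_fscale)

lemma fin_supp_spanS: "f \<in> spanS S \<Longrightarrow> (\<And>g. g \<in> S \<Longrightarrow> fin_supp g) \<Longrightarrow> fin_supp f"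
proof (induction rule: spanS.induct)
  case zero then show ?case by (simp add: zero_fun_def[symmetric])
next
  case (add f g) then show ?case using fin_supp_add[of f g] by (simp add: plus_fun_def)
next
  case (smul f c) then show ?case using fin_supp_fscale[of f c] by (simp add: fscale_def)
qed auto

lemma spanS_mono: "A \<subseteq> B \<Longrightarrow> spanS A \<subseteq> spanS B"
proof
  show "f \<in> spanS B" if "f \<in> spanS A" "A \<subseteq> B" for f
    using that by (induction rule: spanS.induct) (auto intro: spanS.intros)
qed

lemma lmul_sgl: "lmul g (sgl w a) = sgl (g # w) a"
  by (auto simp: lmul_def sgl_def fun_eq_iff split: list.splits)

lemma lmul_add: "lmul g (F + G) = lmul g F + lmul g G"
  by (auto simp: lmul_def fun_eq_iff split: list.splits)

lemma lmul_diff: "lmul g (F - G) = lmul g F - lmul g G"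
  by (auto simp: lmul_def fun_eq_iff split: list.splits)

lemma lmul_fscale: "lmul g (fscale a F) = fscale a (lmul g F)"
  by (auto simp: lmul_def fun_eq_iff split: list.splits)

lemma lmul_zero: "lmul g (\<lambda>_. 0) = (\<lambda>_. 0)"
  unfolding lmul_def by (auto simp: fun_eq_iff split: list.splits)

lemma lmul_lin_comb_fun: "lmul g (lin_comb_fun A xs) = lin_comb_fun (\<lambda>h. lmul g (A h)) xs"
  by (induction xs) (auto simp: lmul_add lmul_fscale lmul_zero)

lemma lmul_eq_lin_ext: "fin_supp F \<Longrightarrow> lmul c F = lin_ext (\<lambda>\<rho>. sgl (c # \<rho>) 1) F"
  by (subst (1) lin_ext_sgl_basis[symmetric])
    (auto simp: lmul_def lin_ext_def sgl_def fun_eq_iff split: list.splits)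

lemma rel_comm_eq:
  "rel_comm u x y w =
   sgl (u @ [x, y] @ w) 1 - sgl (u @ [y, x] @ w) 1 - lin_comb_fun (\<lambda>g. sgl (u @ [g] @ w) 1) (brkc x y)"
proof -
  have "(\<Sum>(g, c)\<leftarrow>xs. sgl (u @ [g] @ w) c v) = lin_comb_fun (\<lambda>g. sgl (u @ [g] @ w) 1) xs v"
    for v and xs :: "(gen \<times> 'a::field) list"
    by (induction xs) (auto simp: sgl_def)
  then show ?thesis by (simp add: rel_comm_def fun_eq_iff)
qed

lemma lmul_rel_comm: "lmul g (rel_comm u x y w) = rel_comm (g # u) x y w"
  unfolding rel_comm_eq lmul_diff lmul_lin_comb_fun lmul_sgl by simp

section \<open>The action on ordered monomials\<close>

fun L_index :: "gen \<Rightarrow> int" where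
  "L_index (L i) = i"
| "L_index _ = 0"

text \<open>\<open>pbw_act ch x \<sigma>\<close> is \<open>x\<close> applied to the ordered monomial \<open>\<sigma>\<close> of the module induced from
  the character \<open>ch\<close>, computed by \<open>x c t = c (x t) + [x, c] t\<close>.  The words of \<open>x t\<close> longer
  than \<open>t\<close> are ones in front of which \<open>c\<close> may be prepended anyway (\<open>pbw_act_Cons_reduce\<close>); the
  length test only makes the recursion terminate.\<close>
fun pbw_act :: "(gen \<Rightarrow> 'a::field_char_0 option) \<Rightarrow> gen \<Rightarrow> gen list \<Rightarrow> gen list \<Rightarrow> 'a" where
  "pbw_act ch x [] = (case ch x of None \<Rightarrow> sgl [x] 1 | Some a \<Rightarrow> sgl [] a)"
| "pbw_act ch x (c # t) =
    (if ch x = None \<and> L_index x \<le> L_index c then sgl (x # c # t) 1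
     else lin_ext (\<lambda>\<rho>. if length \<rho> \<le> length t then pbw_act ch c \<rho> else sgl (c # \<rho>) 1) (pbw_act ch x t)
       + lin_comb_fun (\<lambda>g. pbw_act ch g t) (brkc x c))"

declare pbw_act.simps(2) [simp del]

lemma pbw_act_Cons_prepend:
  "ch x = None \<Longrightarrow> L_index x \<le> L_index c \<Longrightarrow> pbw_act ch x (c # t) = sgl (x # c # t) 1"
  by (simp add: pbw_act.simps(2))

lemma pbw_act_Cons_commute:
  assumes "\<not> (ch x = None \<and> L_index x \<le> L_index c)"
  shows "pbw_act ch x (c # t) =
     lin_ext (\<lambda>\<rho>. if length \<rho> \<le> length t then pbw_act ch c \<rho> else sgl (c # \<rho>) 1) (pbw_act ch x t)
     + lin_comb_fun (\<lambda>g. pbw_act ch g t) (brkc x c)"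
  unfolding pbw_act.simps(2) using assms by (rule if_not_P)

lemma fin_supp_pbw_act: "fin_supp (pbw_act ch x \<sigma>)"
  by (induction ch x \<sigma> rule: pbw_act.induct)
    (auto simp: pbw_act.simps(2) split: option.split intro!: fin_supp_add fin_supp_lin_ext fin_supp_lin_comb_fun)

lemma fin_supp_lin_ext_pbw_act: "fin_supp F \<Longrightarrow> fin_supp (lin_ext (pbw_act ch g) F)"
  by (rule fin_supp_lin_ext) (simp_all add: fin_supp_pbw_act)

text \<open>A character of the subalgebra spanned by the generators on which \<open>ch\<close> is defined; all
  other generators are \<open>L\<close>'s.\<close>
locale bms_character =
  fixes ch :: "gen \<Rightarrow> 'a::field_char_0 option"
  assumes undefined_is_L: "ch g = None \<Longrightarrow> \<exists>i. g = L i"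
    and domain_bracket_closed: "ch x \<noteq> None \<Longrightarrow> ch y \<noteq> None \<Longrightarrow>
      (g, a) \<in> set (brkc x y :: (gen \<times> 'a) list) \<Longrightarrow> a \<noteq> 0 \<Longrightarrow> ch g \<noteq> None"
    and character_bracket: "ch x \<noteq> None \<Longrightarrow> ch y \<noteq> None \<Longrightarrow>
      lin_comb (\<lambda>g. case ch g of Some c \<Rightarrow> c | None \<Rightarrow> 0) (brkc x y) = 0"
begin

abbreviation act :: "gen \<Rightarrow> gen list \<Rightarrow> gen list \<Rightarrow> 'a" where
  "act \<equiv> pbw_act ch"

definition normal_word :: "gen list \<Rightarrow> bool" where
  "normal_word \<sigma> \<longleftrightarrow> (\<forall>g\<in>set \<sigma>. ch g = None) \<and> sorted (map L_index \<sigma>)"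

lemma normal_word_Nil [simp]: "normal_word []"
  by (simp add: normal_word_def)

lemma normal_word_Cons:
  "normal_word (c # t) \<longleftrightarrow> ch c = None \<and> (\<forall>y\<in>set t. L_index c \<le> L_index y) \<and> normal_word t"
  by (auto simp: normal_word_def)

lemma L_index_inj: "ch g = None \<Longrightarrow> ch h = None \<Longrightarrow> L_index g = L_index h \<Longrightarrow> g = h"
  using undefined_is_L[of g] undefined_is_L[of h] by auto

lemma pbw_act_prepend: "ch c = None \<Longrightarrow> \<forall>y\<in>set \<rho>. L_index c \<le> L_index y \<Longrightarrow> act c \<rho> = sgl (c # \<rho>) 1"
  by (cases \<rho>) (auto simp: pbw_act_Cons_prepend)

lemma pbw_act_supp:
  "normal_word \<sigma> \<Longrightarrow> act x \<sigma> \<rho> \<noteq> 0 \<Longrightarrow> normal_word \<rho> \<and> (length \<rho> \<le> length \<sigma> \<or>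
     (length \<rho> = Suc (length \<sigma>) \<and> ch x = None \<and> set \<rho> \<subseteq> insert x (set \<sigma>)))"
proof (induction "length \<sigma>" arbitrary: x \<sigma> \<rho> rule: less_induct)
  case less
  show ?case
  proof (cases \<sigma>)
    case Nil
    then show ?thesis using less.prems
      by (cases "ch x") (auto simp: normal_word_def dest!: sgl_neq_zeroD)
  next
    case (Cons c t)
    have c: "ch c = None" "\<forall>y\<in>set t. L_index c \<le> L_index y" and t: "normal_word t"
      using less.prems Cons by (auto simp: normal_word_Cons)
    note IH = less.hyps[of t, OF _ t] less.hyps[of _ c]
    show ?thesis
    proof (cases "ch x = None \<and> L_index x \<le> L_index c")
      case True
      then have "\<rho> = x # c # t" using less.prems Cons by (auto simp: pbw_act_Cons_prepend dest!: sgl_neq_zeroD)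
      then show ?thesis using True c t Cons by (auto simp: normal_word_Cons)
    next
      case commute: False
      let ?G = "\<lambda>\<rho>. if length \<rho> \<le> length t then act c \<rho> else sgl (c # \<rho>) 1"
      have "\<rho> \<in> supp (lin_ext ?G (act x t)) \<or> \<rho> \<in> supp (lin_comb_fun (\<lambda>g. act g t) (brkc x c))"
        using less.prems Cons pbw_act_Cons_commute[of ch x c t, OF commute] by auto
      then show ?thesis
      proof
        assume "\<rho> \<in> supp (lin_ext ?G (act x t))"
        then obtain \<rho>' where \<rho>': "act x t \<rho>' \<noteq> 0" and \<rho>: "?G \<rho>' \<rho> \<noteq> 0"
          using supp_lin_ext by fastforce
        have IH_\<rho>': "normal_word \<rho>' \<and> (length \<rho>' \<le> length t \<or>
           (length \<rho>' = Suc (length t) \<and> ch x = None \<and> set \<rho>' \<subseteq> insert x (set t)))"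
          using IH(1) Cons \<rho>' by auto
        show ?thesis
        proof (cases "length \<rho>' \<le> length t")
          case True
          then show ?thesis using IH(2)[of \<rho>' \<rho>] \<rho> Cons IH_\<rho>' by fastforce
        next
          case False
          then have "\<rho> = c # \<rho>'" using \<rho> by (auto dest!: sgl_neq_zeroD)
          moreover have "L_index c < L_index x" using IH_\<rho>' False commute by auto
          ultimately show ?thesis using c IH_\<rho>' False Cons by (auto simp: normal_word_Cons)
        qed
      next
        assume "\<rho> \<in> supp (lin_comb_fun (\<lambda>g. act g t) (brkc x c))"
        then obtain g where "act g t \<rho> \<noteq> 0"
          using supp_lin_comb_fun by fastforce
        then show ?thesis using IH(1) Cons by fastforce
      qed
    qed
  qed
qed

lemma pbw_act_Cons_reduce:
  assumes "normal_word (c # t)" and commute: "\<not> (ch x = None \<and> L_index x \<le> L_index c)"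
  shows "act x (c # t) = lin_ext (act c) (act x t) + lin_comb_fun (\<lambda>g. act g t) (brkc x c)"
proof -
  have c: "ch c = None" "\<forall>y\<in>set t. L_index c \<le> L_index y" and t: "normal_word t"
    using assms(1) by (auto simp: normal_word_Cons)
  have "lin_ext (\<lambda>\<rho>. if length \<rho> \<le> length t then act c \<rho> else sgl (c # \<rho>) 1) (act x t)
      = lin_ext (act c) (act x t)"
  proof (rule lin_ext_cong)
    fix \<rho> assume \<rho>: "act x t \<rho> \<noteq> 0"
    show "(if length \<rho> \<le> length t then act c \<rho> else sgl (c # \<rho>) 1) = act c \<rho>"
    proof (cases "length \<rho> \<le> length t")
      case False
      then have "ch x = None" "set \<rho> \<subseteq> insert x (set t)" using pbw_act_supp[OF t \<rho>] by auto
      then have "\<forall>y\<in>set \<rho>. L_index c \<le> L_index y" using commute c by auto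
      then show ?thesis using False pbw_act_prepend[OF c(1)] by simp
    qed simp
  qed
  then show ?thesis using pbw_act_Cons_commute[of ch x c t, OF commute] by simp
qed

lemma pbw_act_Cons:
  assumes ct: "normal_word (c # t)"
  shows "act g (c # t) = lin_ext (act c) (act g t) + lin_comb_fun (\<lambda>h. act h t) (brkc g c)"
proof (cases "ch g = None \<and> L_index g \<le> L_index c")
  case False
  then show ?thesis using pbw_act_Cons_reduce[OF ct] by simp
next
  case prepend: True
  have c: "ch c = None" "\<forall>y\<in>set t. L_index c \<le> L_index y"
    using ct by (auto simp: normal_word_Cons)
  have gct: "act g (c # t) = sgl (g # c # t) 1" using prepend by (simp add: pbw_act_Cons_prepend)
  have gt: "act g t = sgl (g # t) 1" using prepend c by (intro pbw_act_prepend) auto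
  show ?thesis
  proof (cases "g = c")
    case True
    then show ?thesis using gct gt by (simp add: lin_comb_fun_brkc_self lin_ext_sgl_one)
  next
    case False
    then have "L_index g < L_index c" using prepend c L_index_inj[of g c] by fastforce
    moreover have "normal_word (g # t)" using prepend c ct by (auto simp: normal_word_Cons)
    ultimately have "act c (g # t) = lin_ext (act g) (act c t) + lin_comb_fun (\<lambda>h. act h t) (brkc c g)"
      using pbw_act_Cons_reduce by simp
    also have "lin_ext (act g) (act c t) = act g (c # t)"
      using c by (simp add: pbw_act_prepend lin_ext_sgl_one)
    finally have "act c (g # t) = act g (c # t) - lin_comb_fun (\<lambda>h. act h t) (brkc g c)"
      by (simp only: lin_comb_fun_brkc_antisym[of _ c g] diff_conv_add_uminus)
    then show ?thesis
      by (simp only: gt lin_ext_sgl_one diff_add_cancel)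
  qed
qed

lemma normal_word_head_remove1:
  assumes "normal_word (c # t)" and "c \<in> set t"
  shows "c # remove1 c t = t"
proof (cases t)
  case (Cons d t')
  have c: "ch c = None" "\<forall>y\<in>set t. L_index c \<le> L_index y" and t: "normal_word t"
    using assms(1) by (auto simp: normal_word_Cons)
  have d: "ch d = None" "\<forall>y\<in>set t'. L_index d \<le> L_index y"
    using t Cons by (auto simp: normal_word_Cons)
  have "d = c"
  proof (rule ccontr)
    assume "d \<noteq> c"
    then have "L_index d \<le> L_index c" using assms(2) d Cons by auto
    moreover have "L_index c \<le> L_index d" using c Cons by simp
    ultimately show False using L_index_inj[OF d(1) c(1)] \<open>d \<noteq> c\<close> by simp
  qed
  then show ?thesis using Cons by simp
qed (use assms in simp)

lemma normal_word_eq_if_remove1_eq: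
  assumes "normal_word \<rho>" "normal_word \<sigma>" "x \<in> set \<rho>" "x \<in> set \<sigma>" "remove1 x \<rho> = remove1 x \<sigma>"
  shows "\<rho> = \<sigma>"
proof -
  have "mset \<rho> = mset \<sigma>"
    using assms(3-5) by (metis mset_remove1 insert_DiffM set_mset_mset)
  then have "mset (map L_index \<rho>) = mset (map L_index \<sigma>)" by simp
  moreover have "sorted (map L_index \<rho>)" "sorted (map L_index \<sigma>)"
    using assms(1,2) by (auto simp: normal_word_def)
  ultimately have "map L_index \<rho> = map L_index \<sigma>"
    by (metis properties_for_sort)
  moreover have "inj_on L_index (set \<rho> \<union> set \<sigma>)"
    using assms(1,2) L_index_inj by (auto simp: normal_word_def inj_on_def)
  ultimately show ?thesis
    by (metis map_inj_on)
qed

end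

section \<open>The commutation relations\<close>

context bms_character
begin

definition bracket_rel :: "gen \<Rightarrow> gen \<Rightarrow> gen list \<Rightarrow> bool" where
  "bracket_rel x y \<sigma> \<longleftrightarrow>
     lin_ext (act x) (act y \<sigma>) - lin_ext (act y) (act x \<sigma>) = lin_comb_fun (\<lambda>g. act g \<sigma>) (brkc x y)"

lemma bracket_rel_swap: "bracket_rel y x \<sigma> \<Longrightarrow> bracket_rel x y \<sigma>"
  unfolding bracket_rel_def lin_comb_fun_brkc_antisym[of _ y x] by (metis minus_diff_eq minus_minus)

lemma bracket_rel_prepend:
  assumes "normal_word \<sigma>" and "ch y = None" and "\<forall>z\<in>set \<sigma>. L_index y \<le> L_index z"
  shows "bracket_rel x y \<sigma>"
proof -
  have "normal_word (y # \<sigma>)" using assms by (simp add: normal_word_Cons)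
  moreover have "act y \<sigma> = sgl (y # \<sigma>) 1" using assms by (simp add: pbw_act_prepend)
  ultimately show ?thesis by (simp add: bracket_rel_def lin_ext_sgl_one pbw_act_Cons)
qed

lemma bracket_rel_Nil: "bracket_rel x y []"
proof (cases "ch x = None \<or> ch y = None")
  case True
  then show ?thesis
    by (metis bracket_rel_prepend bracket_rel_swap empty_iff list.set(1) normal_word_Nil)
next
  case False
  then obtain a b where ab: "ch x = Some a" "ch y = Some b" by auto
  let ?ch = "\<lambda>g. case ch g of Some c \<Rightarrow> c | None \<Rightarrow> 0"
  have "lin_comb_fun (\<lambda>g. act g []) (brkc x y) v = lin_comb (\<lambda>g. ?ch g * sgl [] 1 v) (brkc x y)" for v
    unfolding lin_comb_fun_apply
  proof (rule lin_comb_cong)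
    fix g and c :: 'a assume "(g, c) \<in> set (brkc x y)" "c \<noteq> 0"
    then obtain d where "ch g = Some d" using domain_bracket_closed False by blast
    then show "act g [] v = ?ch g * sgl [] 1 v" by (simp add: sgl_def)
  qed
  then have "lin_comb_fun (\<lambda>g. act g []) (brkc x y) = 0"
    using character_bracket False by (simp add: fun_eq_iff lin_comb_mult_right)
  moreover have "lin_ext (act x) (act y []) = fscale b (sgl [] a)"
    and "lin_ext (act y) (act x []) = fscale a (sgl [] b)"
    using ab by simp_all
  ultimately show ?thesis by (simp add: bracket_rel_def fun_eq_iff sgl_def)
qed

lemma lin_ext_act_pbw_act_Cons:
  assumes ct: "normal_word (c # t)" and commute: "\<not> (ch y = None \<and> L_index y \<le> L_index c)"
    and rel: "\<forall>\<rho>\<in>supp (act y t). bracket_rel x c \<rho>"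
  shows "lin_ext (act x) (act y (c # t)) = lin_ext (act c) (lin_ext (act x) (act y t))
     + lin_comb_fun (\<lambda>g. lin_ext (act g) (act y t)) (brkc x c)
     + lin_comb_fun (\<lambda>g. lin_ext (act x) (act g t)) (brkc y c)"
proof -
  note fin = fin_supp_pbw_act
  have "lin_ext (act x) (act y (c # t))
      = lin_ext (act x) (lin_ext (act c) (act y t)) + lin_ext (act x) (lin_comb_fun (\<lambda>h. act h t) (brkc y c))"
    unfolding pbw_act_Cons_reduce[OF ct commute]
    by (rule lin_ext_add) (auto simp: fin fin_supp_lin_ext_pbw_act intro!: fin_supp_lin_comb_fun)
  also have "lin_ext (act x) (lin_ext (act c) (act y t)) = lin_ext (\<lambda>\<rho>. lin_ext (act x) (act c \<rho>)) (act y t)"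
    by (rule lin_ext_lin_ext) (auto simp: fin)
  also have "\<dots> = lin_ext (\<lambda>\<rho>. lin_ext (act c) (act x \<rho>) + lin_comb_fun (\<lambda>g. act g \<rho>) (brkc x c)) (act y t)"
    using rel by (intro lin_ext_cong) (simp add: bracket_rel_def diff_eq_eq add.commute)
  also have "\<dots> = lin_ext (act c) (lin_ext (act x) (act y t))
      + lin_comb_fun (\<lambda>g. lin_ext (act g) (act y t)) (brkc x c)"
    by (simp add: lin_ext_map_add lin_ext_map_lin_comb_fun lin_ext_lin_ext fin)
  also have "lin_ext (act x) (lin_comb_fun (\<lambda>h. act h t) (brkc y c))
      = lin_comb_fun (\<lambda>g. lin_ext (act x) (act g t)) (brkc y c)"
    by (rule lin_ext_lin_comb_fun) (simp add: fin)
  finally show ?thesis .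
qed

text \<open>The case where both \<open>x\<close> and \<open>y\<close> are commuted past \<open>c\<close>: here the relation reduces to
  the relations on shorter monomials and the Jacobi identity.\<close>
lemma bracket_rel_Cons_commute:
  assumes ct: "normal_word (c # t)"
    and x: "\<not> (ch x = None \<and> L_index x \<le> L_index c)" and y: "\<not> (ch y = None \<and> L_index y \<le> L_index c)"
    and IH_t: "\<And>x' y'. bracket_rel x' y' t"
    and IH_x: "\<forall>\<rho>\<in>supp (act x t). bracket_rel y c \<rho>" and IH_y: "\<forall>\<rho>\<in>supp (act y t). bracket_rel x c \<rho>"
  shows "bracket_rel x y (c # t)"
proof -
  note fin = fin_supp_pbw_act
  define F G B where "F = act x t" and "G = act y t" and "B = (\<lambda>h. act h t)"
  have xy: "lin_ext (act x) G - lin_ext (act y) F = lin_comb_fun B (brkc x y)"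
    using IH_t[of x y] by (simp add: bracket_rel_def F_def G_def B_def)
  have xc: "lin_comb_fun (\<lambda>g. lin_ext (act g) G) (brkc x c) - lin_comb_fun (\<lambda>g. lin_ext (act y) (B g)) (brkc x c)
      = lin_comb_fun (\<lambda>g. lin_comb_fun B (brkc g y)) (brkc x c)"
    unfolding lin_comb_fun_diff[symmetric] using IH_t by (simp add: bracket_rel_def G_def B_def)
  have yc: "lin_comb_fun (\<lambda>g. lin_ext (act x) (B g)) (brkc y c) - lin_comb_fun (\<lambda>g. lin_ext (act g) F) (brkc y c)
      = lin_comb_fun (\<lambda>g. lin_comb_fun B (brkc x g)) (brkc y c)"
    unfolding lin_comb_fun_diff[symmetric] using IH_t by (simp add: bracket_rel_def F_def B_def)
  have "lin_ext (act x) (act y (c # t)) - lin_ext (act y) (act x (c # t))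
     = lin_ext (act c) (lin_ext (act x) G - lin_ext (act y) F)
       + (lin_comb_fun (\<lambda>g. lin_ext (act g) G) (brkc x c) - lin_comb_fun (\<lambda>g. lin_ext (act y) (B g)) (brkc x c))
       + (lin_comb_fun (\<lambda>g. lin_ext (act x) (B g)) (brkc y c) - lin_comb_fun (\<lambda>g. lin_ext (act g) F) (brkc y c))"
    unfolding lin_ext_act_pbw_act_Cons[OF ct y IH_y] lin_ext_act_pbw_act_Cons[OF ct x IH_x]
    by (simp add: F_def G_def B_def lin_ext_diff fin fin_supp_lin_ext algebra_simps)
  also have "\<dots> = lin_ext (act c) (lin_comb_fun B (brkc x y))
       + lin_comb_fun (\<lambda>g. lin_comb_fun B (brkc g y)) (brkc x c)
       + lin_comb_fun (\<lambda>g. lin_comb_fun B (brkc x g)) (brkc y c)"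
    unfolding xy xc yc ..
  also have "\<dots> = lin_comb_fun (\<lambda>g. lin_ext (act c) (B g) + lin_comb_fun B (brkc g c)) (brkc x y)"
    by (simp add: lin_ext_lin_comb_fun B_def fin add.assoc lin_comb_fun_brkc_jacobi lin_comb_fun_add)
  also have "\<dots> = lin_comb_fun (\<lambda>g. act g (c # t)) (brkc x y)"
    by (simp add: B_def pbw_act_Cons[OF ct])
  finally show ?thesis unfolding bracket_rel_def .
qed

lemma bracket_rel_normal: "normal_word \<sigma> \<Longrightarrow> bracket_rel x y \<sigma>"
proof (induction "length \<sigma>" arbitrary: x y \<sigma> rule: less_induct)
  case less
  show ?case
  proof (cases \<sigma>)
    case Nil
    then show ?thesis by (simp add: bracket_rel_Nil)
  next
    case (Cons c t)
    have ct: "normal_word (c # t)" using less.prems Cons by simp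
    have c: "ch c = None" "\<forall>z\<in>set t. L_index c \<le> L_index z" and t: "normal_word t"
      using ct by (auto simp: normal_word_Cons)
    have IH_t: "bracket_rel x' y' t" for x' y'
      using less.hyps[of t] Cons t by auto
    txt \<open>The words of \<open>y' t\<close> are shorter than \<open>\<sigma>\<close> or begin with \<open>y'\<close>, in front of which \<open>c\<close>
      may be prepended.\<close>
    have IH_supp: "\<forall>\<rho>\<in>supp (act y' t). bracket_rel x' c \<rho>"
      if y': "\<not> (ch y' = None \<and> L_index y' \<le> L_index c)" for x' y'
    proof
      fix \<rho> assume "\<rho> \<in> supp (act y' t)"
      then have \<rho>: "act y' t \<rho> \<noteq> 0" by simp
      show "bracket_rel x' c \<rho>"
      proof (cases "length \<rho> \<le> length t")
        case True
        then show ?thesis using less.hyps[of \<rho>] pbw_act_supp[OF t \<rho>] Cons by auto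
      next
        case False
        then have "ch y' = None" "set \<rho> \<subseteq> insert y' (set t)" "normal_word \<rho>"
          using pbw_act_supp[OF t \<rho>] by auto
        then show ?thesis using y' c by (intro bracket_rel_prepend) auto
      qed
    qed
    consider "ch y = None \<and> L_index y \<le> L_index c" | "ch x = None \<and> L_index x \<le> L_index c"
      | "\<not> (ch x = None \<and> L_index x \<le> L_index c)" "\<not> (ch y = None \<and> L_index y \<le> L_index c)"
      by blast
    then show ?thesis
    proof cases
      case 1
      then show ?thesis using ct c Cons by (intro bracket_rel_prepend) auto
    next
      case 2
      then have "bracket_rel y x \<sigma>" using ct c Cons by (intro bracket_rel_prepend) auto
      then show ?thesis by (rule bracket_rel_swap)
    next
      case 3
      then show ?thesis
        unfolding Cons using IH_t IH_supp by (intro bracket_rel_Cons_commute[OF ct]) auto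
    qed
  qed
qed

end

section \<open>Induced modules and their normal form\<close>

definition ind_kernel_gens :: "(gen \<Rightarrow> 'a::field option) \<Rightarrow> (gen list \<Rightarrow> 'a) set" where
  "ind_kernel_gens ch = {rel_comm u x y w | u x y w. True}
      \<union> {(\<lambda>v. sgl (u @ [h]) 1 v - sgl u c v) | u h c. ch h = Some c}"

definition ind_kernel :: "(gen \<Rightarrow> 'a::field option) \<Rightarrow> (gen list \<Rightarrow> 'a) set" where
  "ind_kernel ch = spanS (ind_kernel_gens ch)"

lemma Nsub_eq_ind_kernel: "Nsub Mv s cL cM = ind_kernel (chi Mv s cL cM)"
  by (simp add: Nsub_def ind_kernel_def ind_kernel_gens_def)

lemma mem_ind_kernel_gens:
  "f \<in> ind_kernel_gens ch \<longleftrightarrow>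
     (\<exists>u x y w. f = rel_comm u x y w) \<or> (\<exists>u h c. ch h = Some c \<and> f = sgl (u @ [h]) 1 - sgl u c)"
  unfolding ind_kernel_gens_def fun_diff_def by blast

lemma ind_kernel_zero: "0 \<in> ind_kernel ch" "(\<lambda>_. 0) \<in> ind_kernel ch"
  by (simp_all add: ind_kernel_def spanS_zero_fun spanS.zero)

lemma ind_kernel_plus: "f \<in> ind_kernel ch \<Longrightarrow> g \<in> ind_kernel ch \<Longrightarrow> f + g \<in> ind_kernel ch"
  by (simp add: ind_kernel_def spanS_plus)

lemma ind_kernel_lin_ext:
  "fin_supp F \<Longrightarrow> (\<And>\<rho>. F \<rho> \<noteq> 0 \<Longrightarrow> H \<rho> \<in> ind_kernel ch) \<Longrightarrow> lin_ext H F \<in> ind_kernel ch"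
  unfolding ind_kernel_def by (rule spanS_lin_ext)

lemma ind_kernel_lmul: "f \<in> ind_kernel ch \<Longrightarrow> lmul g f \<in> ind_kernel ch"
  unfolding ind_kernel_def
proof (induction rule: spanS.induct)
  case (base f)
  then consider (comm) u x y w where "f = rel_comm u x y w"
    | (char) u h c where "ch h = Some c" "f = sgl (u @ [h]) 1 - sgl u c"
    by (auto simp: mem_ind_kernel_gens)
  then have "lmul g f \<in> ind_kernel_gens ch"
  proof cases
    case comm
    then show ?thesis unfolding mem_ind_kernel_gens by (blast intro: lmul_rel_comm)
  next
    case char
    then have "lmul g f = sgl ((g # u) @ [h]) 1 - sgl (g # u) c" by (simp add: lmul_diff lmul_sgl)
    then show ?thesis unfolding mem_ind_kernel_gens using char by blast
  qed
  then show ?case by (rule spanS.base)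
next
  case (add f h)
  have "lmul g (\<lambda>v. f v + h v) = (\<lambda>v. lmul g f v + lmul g h v)"
    by (auto simp: lmul_def fun_eq_iff split: list.splits)
  then show ?case using add by (simp add: spanS.add)
next
  case (smul f c)
  have "lmul g (\<lambda>v. c * f v) = (\<lambda>v. c * lmul g f v)"
    by (auto simp: lmul_def fun_eq_iff split: list.splits)
  then show ?case using smul by (simp add: spanS.smul)
qed (simp add: lmul_zero spanS.zero)

lemma fin_supp_ind_kernel: "f \<in> ind_kernel ch \<Longrightarrow> fin_supp f"
  unfolding ind_kernel_def
  by (erule fin_supp_spanS)
    (auto simp: mem_ind_kernel_gens rel_comm_eq intro!: fin_supp_diff fin_supp_lin_comb_fun)

fun act_word :: "(gen \<Rightarrow> 'a::field_char_0 option) \<Rightarrow> gen list \<Rightarrow> (gen list \<Rightarrow> 'a) \<Rightarrow> gen list \<Rightarrow> 'a" where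
  "act_word ch [] F = F"
| "act_word ch (g # u) F = lin_ext (pbw_act ch g) (act_word ch u F)"

definition normal_form :: "(gen \<Rightarrow> 'a::field_char_0 option) \<Rightarrow> (gen list \<Rightarrow> 'a) \<Rightarrow> gen list \<Rightarrow> 'a" where
  "normal_form ch f = lin_ext (\<lambda>w. act_word ch w (sgl [] 1)) f"

lemma fin_supp_act_word: "fin_supp F \<Longrightarrow> fin_supp (act_word ch u F)"
  by (induction u) (auto intro!: fin_supp_lin_ext simp: fin_supp_pbw_act)

lemma act_word_append: "act_word ch (u @ w) F = act_word ch u (act_word ch w F)"
  by (induction u) auto

lemma act_word_diff:
  "fin_supp F1 \<Longrightarrow> fin_supp F2 \<Longrightarrow> act_word ch u (F1 - F2) = act_word ch u F1 - act_word ch u F2"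
  by (induction u) (auto simp: lin_ext_diff fin_supp_act_word)

lemma act_word_zero [simp]: "act_word ch u 0 = 0"
  by (induction u) (simp_all only: act_word.simps lin_ext_zero)

lemma act_word_fscale: "act_word ch u (fscale a F) = fscale a (act_word ch u F)"
  by (induction u) (simp_all only: act_word.simps lin_ext_fscale)

lemma act_word_lin_comb_fun:
  "(\<And>g. fin_supp (A g)) \<Longrightarrow> act_word ch u (lin_comb_fun A xs) = lin_comb_fun (\<lambda>g. act_word ch u (A g)) xs"
  by (induction u) (auto simp: lin_ext_lin_comb_fun fin_supp_act_word)

lemma normal_form_sgl: "normal_form ch (sgl w a) = fscale a (act_word ch w (sgl [] 1))"
  by (simp add: normal_form_def)

lemma normal_form_add:
  "fin_supp f \<Longrightarrow> fin_supp g \<Longrightarrow> normal_form ch (f + g) = normal_form ch f + normal_form ch g"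
  by (simp add: normal_form_def lin_ext_add)

lemma normal_form_diff:
  "fin_supp f \<Longrightarrow> fin_supp g \<Longrightarrow> normal_form ch (f - g) = normal_form ch f - normal_form ch g"
  by (simp add: normal_form_def lin_ext_diff)

lemma normal_form_fscale: "normal_form ch (fscale a f) = fscale a (normal_form ch f)"
  by (simp add: normal_form_def lin_ext_fscale)

lemma normal_form_lin_comb_fun:
  "(\<And>g. fin_supp (A g)) \<Longrightarrow> normal_form ch (lin_comb_fun A xs) = lin_comb_fun (\<lambda>g. normal_form ch (A g)) xs"
  by (simp add: normal_form_def lin_ext_lin_comb_fun)

lemma normal_form_vacuum: "normal_form ch (sgl [] 1) = sgl [] 1"
  by (simp add: normal_form_sgl)

lemma fin_supp_normal_form: "fin_supp f \<Longrightarrow> fin_supp (normal_form ch f)"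
  unfolding normal_form_def by (auto intro!: fin_supp_lin_ext fin_supp_act_word)

context bms_character
begin

abbreviation word_nf :: "gen list \<Rightarrow> gen list \<Rightarrow> 'a" where
  "word_nf w \<equiv> act_word ch w (sgl [] 1)"

lemma fin_supp_word_nf: "fin_supp (word_nf w)"
  by (simp add: fin_supp_act_word)

lemma normal_word_act_word:
  assumes "fin_supp F" and "\<And>\<rho>. F \<rho> \<noteq> 0 \<Longrightarrow> normal_word \<rho>"
  shows "act_word ch u F \<rho> \<noteq> 0 \<Longrightarrow> normal_word \<rho>"
proof (induction u arbitrary: \<rho>)
  case (Cons g u)
  then obtain \<rho>' where "act_word ch u F \<rho>' \<noteq> 0" "act g \<rho>' \<rho> \<noteq> 0"
    using supp_lin_ext[of \<rho> "act g" "act_word ch u F"] by auto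
  then show ?case using Cons.IH pbw_act_supp by blast
qed (use assms in simp)

lemma normal_word_word_nf: "word_nf w \<rho> \<noteq> 0 \<Longrightarrow> normal_word \<rho>"
  by (rule normal_word_act_word) (auto dest: sgl_neq_zeroD)

lemma normal_word_normal_form:
  assumes "fin_supp f" and "normal_form ch f \<rho> \<noteq> 0"
  shows "normal_word \<rho>"
proof -
  obtain w where "word_nf w \<rho> \<noteq> 0"
    using assms supp_lin_ext[of \<rho> "\<lambda>w. word_nf w" f] by (auto simp: normal_form_def)
  then show ?thesis by (rule normal_word_word_nf)
qed

lemma lin_ext_bracket_rel:
  assumes F: "fin_supp F" and normal: "\<forall>\<rho>\<in>supp F. normal_word \<rho>"
  shows "lin_ext (act x) (lin_ext (act y) F) - lin_ext (act y) (lin_ext (act x) F)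
    = lin_comb_fun (\<lambda>g. lin_ext (act g) F) (brkc x y)"
proof -
  have "lin_ext (act x) (lin_ext (act y) F) - lin_ext (act y) (lin_ext (act x) F)
      = lin_ext (\<lambda>\<rho>. lin_ext (act x) (act y \<rho>) - lin_ext (act y) (act x \<rho>)) F"
    using F by (simp add: lin_ext_lin_ext fin_supp_pbw_act lin_ext_map_diff)
  also have "\<dots> = lin_ext (\<lambda>\<rho>. lin_comb_fun (\<lambda>g. act g \<rho>) (brkc x y)) F"
    using bracket_rel_normal normal by (intro lin_ext_cong) (simp add: bracket_rel_def)
  also have "\<dots> = lin_comb_fun (\<lambda>g. lin_ext (act g) F) (brkc x y)"
    by (rule lin_ext_map_lin_comb_fun)
  finally show ?thesis .
qed

text \<open>The independence half of PBW: the normal form factors through the induced module.\<close>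
lemma normal_form_ind_kernel_gens:
  assumes "f \<in> ind_kernel_gens ch"
  shows "normal_form ch f = 0"
  using assms unfolding mem_ind_kernel_gens
proof (elim disjE exE conjE)
  fix u x y w assume f: "f = rel_comm u x y w"
  let ?P = "word_nf w"
  note fin = fin_supp_word_nf fin_supp_lin_ext_pbw_act
  have "normal_form ch f = normal_form ch (sgl (u @ [x, y] @ w) 1) - normal_form ch (sgl (u @ [y, x] @ w) 1)
      - lin_comb_fun (\<lambda>g. normal_form ch (sgl (u @ [g] @ w) 1)) (brkc x y)"
    unfolding f rel_comm_eq
    by (simp add: normal_form_diff normal_form_lin_comb_fun fin_supp_diff fin_supp_lin_comb_fun)
  also have "\<dots> = act_word ch u (lin_ext (act x) (lin_ext (act y) ?P)
      - lin_ext (act y) (lin_ext (act x) ?P) - lin_comb_fun (\<lambda>g. lin_ext (act g) ?P) (brkc x y))"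
    by (simp add: normal_form_sgl act_word_append act_word_diff act_word_lin_comb_fun fin
        fin_supp_diff fin_supp_lin_comb_fun)
  also have "\<dots> = 0"
    using lin_ext_bracket_rel[OF fin_supp_word_nf] normal_word_word_nf by simp
  finally show ?thesis .
next
  fix u h c assume f: "f = sgl (u @ [h]) 1 - sgl u c" and h: "ch h = Some c"
  have "act h [] = fscale c (sgl [] 1)" using h by (simp add: fun_eq_iff sgl_def)
  then show ?thesis
    by (simp add: f normal_form_diff normal_form_sgl act_word_append act_word_fscale)
qed

lemma normal_form_ind_kernel: "f \<in> ind_kernel ch \<Longrightarrow> normal_form ch f = 0"
  unfolding ind_kernel_def
proof (induction rule: spanS.induct)
  case zero
  then show ?case by (simp add: normal_form_def lin_ext_def)
next
  case (base f)
  then show ?case by (rule normal_form_ind_kernel_gens)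
next
  case (add f g)
  have "fin_supp f" "fin_supp g"
    using add fin_supp_ind_kernel by (auto simp: ind_kernel_def)
  moreover have "(\<lambda>v. f v + g v) = f + g" by (simp add: fun_eq_iff)
  ultimately show ?case using add.IH by (simp add: normal_form_add)
next
  case (smul f c)
  have "(\<lambda>v. c * f v) = fscale c f" by (simp add: fun_eq_iff)
  then show ?case using smul.IH by (simp add: normal_form_fscale)
qed

lemma sgl_Cons_minus_act_Cons_eq:
  assumes ct: "normal_word (c # t)" and commute: "\<not> (ch g = None \<and> L_index g \<le> L_index c)"
  shows "sgl (g # c # t) 1 - act g (c # t) =
      rel_comm [] g c t + lmul c (sgl (g # t) 1 - act g t)
      + lin_ext (\<lambda>\<rho>. sgl (c # \<rho>) 1 - act c \<rho>) (act g t)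
      + lin_comb_fun (\<lambda>h. sgl (h # t) 1 - act h t) (brkc g c)"
  unfolding pbw_act_Cons_reduce[OF ct commute] rel_comm_eq lmul_diff lmul_sgl
    lin_comb_fun_diff lin_ext_map_diff lmul_eq_lin_ext[OF fin_supp_pbw_act, symmetric]
  by (simp add: algebra_simps)

text \<open>The spanning half of PBW: modulo the kernel, \<open>g \<sigma>\<close> is \<open>act g \<sigma>\<close>.\<close>
lemma sgl_Cons_minus_act_in_ind_kernel: "normal_word \<sigma> \<Longrightarrow> sgl (g # \<sigma>) 1 - act g \<sigma> \<in> ind_kernel ch"
proof (induction "length \<sigma>" arbitrary: g \<sigma> rule: less_induct)
  case less
  show ?case
  proof (cases \<sigma>)
    case Nil
    then show ?thesis
    proof (cases "ch g")
      case (Some a)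
      then have "sgl ([] @ [g]) 1 - sgl [] a \<in> ind_kernel_gens ch"
        unfolding mem_ind_kernel_gens by blast
      then show ?thesis using Nil Some by (simp add: ind_kernel_def spanS.base)
    qed (simp add: ind_kernel_zero)
  next
    case (Cons c t)
    have ct: "normal_word (c # t)" using less.prems Cons by simp
    have c: "ch c = None" "\<forall>y\<in>set t. L_index c \<le> L_index y" and t: "normal_word t"
      using ct by (auto simp: normal_word_Cons)
    have IH_t: "sgl (h # t) 1 - act h t \<in> ind_kernel ch" for h
      using less.hyps[of t h] Cons t by auto
    show ?thesis
    proof (cases "ch g = None \<and> L_index g \<le> L_index c")
      case True
      then show ?thesis using Cons ind_kernel_zero by (simp add: pbw_act_Cons_prepend)
    next
      case commute: False
      have "rel_comm [] g c t \<in> ind_kernel ch"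
        unfolding ind_kernel_def by (rule spanS.base) (auto simp: mem_ind_kernel_gens)
      moreover have "lmul c (sgl (g # t) 1 - act g t) \<in> ind_kernel ch"
        using IH_t by (rule ind_kernel_lmul)
      moreover have "lin_ext (\<lambda>\<rho>. sgl (c # \<rho>) 1 - act c \<rho>) (act g t) \<in> ind_kernel ch"
      proof (rule ind_kernel_lin_ext[OF fin_supp_pbw_act])
        fix \<rho> assume \<rho>: "act g t \<rho> \<noteq> 0"
        show "sgl (c # \<rho>) 1 - act c \<rho> \<in> ind_kernel ch"
        proof (cases "length \<rho> \<le> length t")
          case True
          then show ?thesis using less.hyps[of \<rho> c] pbw_act_supp[OF t \<rho>] Cons by auto
        next
          case False
          then have "\<forall>z\<in>set \<rho>. L_index c \<le> L_index z" using pbw_act_supp[OF t \<rho>] commute c by auto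
          then show ?thesis using c by (simp add: pbw_act_prepend ind_kernel_zero)
        qed
      qed
      moreover have "lin_comb_fun (\<lambda>h. sgl (h # t) 1 - act h t) (brkc g c) \<in> ind_kernel ch"
        using IH_t unfolding ind_kernel_def by (rule spanS_lin_comb_fun)
      ultimately show ?thesis
        unfolding Cons sgl_Cons_minus_act_Cons_eq[OF ct commute] by (intro ind_kernel_plus)
    qed
  qed
qed

lemma sgl_minus_word_nf_in_ind_kernel: "sgl w 1 - word_nf w \<in> ind_kernel ch"
proof (induction w)
  case (Cons g w)
  have "lin_ext (\<lambda>\<rho>. sgl (g # \<rho>) 1 - act g \<rho>) (word_nf w) = lmul g (word_nf w) - word_nf (g # w)"
    by (simp only: lin_ext_map_diff lmul_eq_lin_ext[OF fin_supp_word_nf] act_word.simps)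
  then have eq: "sgl (g # w) 1 - word_nf (g # w)
      = lmul g (sgl w 1 - word_nf w) + lin_ext (\<lambda>\<rho>. sgl (g # \<rho>) 1 - act g \<rho>) (word_nf w)"
    by (simp only: lmul_diff lmul_sgl add_diff_eq diff_add_cancel)
  have "lin_ext (\<lambda>\<rho>. sgl (g # \<rho>) 1 - act g \<rho>) (word_nf w) \<in> ind_kernel ch"
    by (rule ind_kernel_lin_ext[OF fin_supp_word_nf])
      (simp add: normal_word_word_nf sgl_Cons_minus_act_in_ind_kernel)
  then show ?case unfolding eq by (rule ind_kernel_plus[OF ind_kernel_lmul[OF Cons.IH]])
qed (simp add: ind_kernel_zero)

lemma diff_normal_form_in_ind_kernel:
  assumes "fin_supp f"
  shows "f - normal_form ch f \<in> ind_kernel ch"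
proof -
  have "f - normal_form ch f = lin_ext (\<lambda>w. sgl w 1 - word_nf w) f"
    using assms by (simp add: normal_form_def lin_ext_map_diff lin_ext_sgl_basis)
  also have "\<dots> \<in> ind_kernel ch"
    using assms sgl_minus_word_nf_in_ind_kernel by (rule ind_kernel_lin_ext)
  finally show ?thesis .
qed

lemma ind_kernel_iff_normal_form_eq_0:
  "fin_supp f \<Longrightarrow> f \<in> ind_kernel ch \<longleftrightarrow> normal_form ch f = 0"
  using diff_normal_form_in_ind_kernel normal_form_ind_kernel by force

lemma normal_form_lmul: "fin_supp f \<Longrightarrow> normal_form ch (lmul g f) = lin_ext (act g) (normal_form ch f)"
  by (simp add: normal_form_def lmul_eq_lin_ext lin_ext_lin_ext lin_ext_sgl_one fin_supp_word_nf)

end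

section \<open>The action of the \<open>M\<^sub>k\<close> on the massive module\<close>

definition supp_shorter :: "(gen list \<Rightarrow> 'a::zero) \<Rightarrow> nat \<Rightarrow> bool" where
  "supp_shorter F n \<longleftrightarrow> (\<forall>\<rho>. F \<rho> \<noteq> 0 \<longrightarrow> length \<rho> < n)"

lemma supp_shorter_add:
  "supp_shorter F n \<Longrightarrow> supp_shorter G n \<Longrightarrow> supp_shorter (F + G :: _ \<Rightarrow> 'a::monoid_add) n"
  unfolding supp_shorter_def by (metis add.right_neutral plus_fun_apply)

lemma supp_shorter_fscale: "supp_shorter F n \<Longrightarrow> supp_shorter (fscale a F :: _ \<Rightarrow> 'a::mult_zero) n"
  unfolding supp_shorter_def by (metis fscale_apply mult_zero_right)

lemma supp_shorter_mono: "supp_shorter F n \<Longrightarrow> n \<le> m \<Longrightarrow> supp_shorter F m"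
  by (force simp: supp_shorter_def)

lemma supp_shorter_sgl: "length w < n \<Longrightarrow> supp_shorter (sgl w a) n"
  by (auto simp: supp_shorter_def dest: sgl_neq_zeroD)

lemma supp_shorter_lmul: "supp_shorter F (n - 1) \<Longrightarrow> supp_shorter (lmul c F) n"
  unfolding supp_shorter_def lmul_def by (auto split: list.splits if_splits)

locale massive_character = bms_character ch for ch :: "gen \<Rightarrow> 'a::field_char_0 option" +
  fixes Mv cM :: 'a
  assumes ch_M: "ch (M k) = Some (if k = 0 then Mv else 0)"
    and ch_CM: "ch CM = Some cM"
    and ch_L0: "ch (L 0) \<noteq> None"
begin

text \<open>\<open>M\<^bsub>-i\<^esub> L\<^sub>i\<close> acts on the vacuum by \<open>contraction_coeff i\<close>, the eigenvalue of
  \<open>[M\<^bsub>-i\<^esub>, L\<^sub>i] = -2i M\<^sub>0 - (i\<^sup>3 - i)/12 C\<^sub>M\<close>.\<close>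
definition contraction_coeff :: "int \<Rightarrow> 'a" where
  "contraction_coeff i = - (2 * of_int i * Mv) - of_int (i ^ 3 - i) / 12 * cM"

lemma contraction_coeff_eq:
  "contraction_coeff i = - (2 * of_int i) * (Mv + (of_nat (nat \<bar>i\<bar>) ^ 2 - 1) / 24 * cM)"
proof -
  have "(of_nat (nat \<bar>i\<bar>) :: 'a) ^ 2 = of_int i ^ 2"
    by (simp flip: of_int_power)
  then show ?thesis
    unfolding contraction_coeff_def by (simp add: field_simps power3_eq_cube power2_eq_square)
qed

text \<open>The leading term of \<open>M\<^sub>k t\<close> for \<open>k \<noteq> 0\<close> and an ordered monomial \<open>t\<close>.\<close>
definition contraction :: "int \<Rightarrow> gen list \<Rightarrow> gen list \<Rightarrow> 'a" where
  "contraction k t =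
     fscale (contraction_coeff (- k) * of_nat (count (mset t) (L (- k)))) (sgl (remove1 (L (- k)) t) 1)"

lemma undefined_is_L_nonzero: "ch g = None \<Longrightarrow> \<exists>i. g = L i \<and> i \<noteq> 0"
  by (metis undefined_is_L ch_L0)

lemma pbw_act_CM: "normal_word t \<Longrightarrow> act CM t = fscale cM (sgl t 1)"
proof (induction t)
  case Nil
  then show ?case using ch_CM by (simp add: fscale_def sgl_def fun_eq_iff)
next
  case (Cons c t)
  have c: "ch c = None" "\<forall>y\<in>set t. L_index c \<le> L_index y" and t: "normal_word t"
    using Cons.prems by (auto simp: normal_word_Cons)
  have "act CM (c # t) = lin_ext (act c) (act CM t) + lin_comb_fun (\<lambda>g. act g t) (brkc CM c)"
    by (rule pbw_act_Cons[OF Cons.prems])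
  also have "\<dots> = lin_ext (act c) (fscale cM (sgl t 1))"
    by (simp only: Cons.IH[OF t] brkc.simps lin_comb_fun_simps add_0_right)
  also have "\<dots> = fscale cM (sgl (c # t) 1)"
    by (simp only: lin_ext_fscale lin_ext_sgl_one pbw_act_prepend[OF c])
  finally show ?case .
qed

lemma pbw_act_M_supp: "normal_word t \<Longrightarrow> act (M k) t \<rho> \<noteq> 0 \<Longrightarrow> set \<rho> \<subseteq> set t"
proof (induction t arbitrary: k \<rho>)
  case Nil
  then show ?case using ch_M[of k] by (auto dest: sgl_neq_zeroD)
next
  case (Cons c t)
  have c: "ch c = None" "\<forall>y\<in>set t. L_index c \<le> L_index y" and t: "normal_word t"
    using Cons.prems by (auto simp: normal_word_Cons)
  obtain i where i: "c = L i" using undefined_is_L_nonzero[OF c(1)] by auto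
  have "\<rho> \<in> supp (lin_ext (act c) (act (M k) t)) \<or> \<rho> \<in> supp (lin_comb_fun (\<lambda>g. act g t) (brkc (M k) c))"
    using Cons.prems(2) pbw_act_Cons[OF Cons.prems(1), of "M k"] by auto
  then show ?case
  proof
    assume "\<rho> \<in> supp (lin_ext (act c) (act (M k) t))"
    then obtain \<rho>' where \<rho>': "act (M k) t \<rho>' \<noteq> 0" and "act c \<rho>' \<rho> \<noteq> 0"
      using supp_lin_ext by fastforce
    moreover have "set \<rho>' \<subseteq> set t" using Cons.IH[OF t \<rho>'] .
    then have "act c \<rho>' = sgl (c # \<rho>') 1" using c by (intro pbw_act_prepend) auto
    ultimately have "\<rho> = c # \<rho>'" by (auto dest: sgl_neq_zeroD)
    then show ?thesis using \<open>set \<rho>' \<subseteq> set t\<close> by auto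
  next
    assume "\<rho> \<in> supp (lin_comb_fun (\<lambda>g. act g t) (brkc (M k) c))"
    then have "act (M (i + k)) t \<rho> \<noteq> 0 \<or> act CM t \<rho> \<noteq> 0"
      using supp_lin_comb_fun by (fastforce simp: i split: if_splits)
    then show ?thesis
      using Cons.IH[OF t] pbw_act_CM[OF t] by (auto dest: sgl_neq_zeroD)
  qed
qed

lemma pbw_act_M_Cons:
  assumes "normal_word (L i # t)"
  shows "act (M k) (L i # t) = lmul (L i) (act (M k) t) + fscale (- of_int (i - k)) (act (M (i + k)) t)
    + (if k = - i then fscale (- (of_int (i ^ 3 - i) / 12) * cM) (sgl t 1) else 0)"
proof -
  have i: "ch (L i) = None" "\<forall>y\<in>set t. i \<le> L_index y" and t: "normal_word t"
    using assms by (auto simp: normal_word_Cons)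
  have "lin_ext (act (L i)) (act (M k) t) = lin_ext (\<lambda>\<rho>. sgl (L i # \<rho>) 1) (act (M k) t)"
  proof (rule lin_ext_cong)
    fix \<rho> assume "act (M k) t \<rho> \<noteq> 0"
    then have "set \<rho> \<subseteq> set t" using pbw_act_M_supp[OF t] by auto
    then show "act (L i) \<rho> = sgl (L i # \<rho>) 1" using i by (intro pbw_act_prepend) auto
  qed
  then show ?thesis
    using pbw_act_Cons[OF assms, of "M k"] pbw_act_CM[OF t]
    by (simp add: lmul_eq_lin_ext fin_supp_pbw_act fscale_def fun_eq_iff)
qed

lemma supp_shorter_contraction: "supp_shorter (contraction k t) (length t)"
proof (cases "L (- k) \<in> set t")
  case True
  then have "length (remove1 (L (- k)) t) < length t"
    using length_pos_if_in_set[OF True] by (simp add: length_remove1)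
  then show ?thesis unfolding contraction_def by (intro supp_shorter_fscale supp_shorter_sgl)
next
  case False
  then show ?thesis by (simp add: contraction_def supp_shorter_def)
qed

lemma contraction_Cons:
  assumes it: "normal_word (L i # t)"
  shows "contraction k (L i # t) = lmul (L i) (contraction k t)
    + (if k = - i then fscale (contraction_coeff i) (sgl t 1) else 0)"
proof (cases "k = - i")
  case True
  let ?n = "count (mset t) (L i)"
  have "lmul (L i) (contraction k t) = fscale (contraction_coeff i * of_nat ?n) (sgl t 1)"
  proof (cases "L i \<in> set t")
    case True
    then show ?thesis
      using \<open>k = - i\<close> normal_word_head_remove1[OF it] by (simp add: contraction_def lmul_fscale lmul_sgl)
  qed (use \<open>k = - i\<close> in \<open>simp add: contraction_def fun_eq_iff lmul_def split: list.split\<close>)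
  then show ?thesis
    using True by (simp add: contraction_def fun_eq_iff algebra_simps)
next
  case False
  then have "L (- k) \<noteq> L i" by simp
  then show ?thesis
    using False by (simp add: contraction_def lmul_fscale lmul_sgl)
qed

lemma pbw_act_M0_Cons_diff:
  assumes "normal_word (L i # t)"
  shows "act (M 0) (L i # t) - fscale Mv (sgl (L i # t) 1)
    = lmul (L i) (act (M 0) t - fscale Mv (sgl t 1)) + fscale (- of_int i) (act (M i) t)"
proof -
  have "i \<noteq> 0" using assms ch_L0 by (auto simp: normal_word_Cons)
  then show ?thesis using pbw_act_M_Cons[OF assms, of 0] by (simp add: lmul_diff lmul_fscale lmul_sgl)
qed

lemma pbw_act_M_Cons_diff_contraction:
  assumes it: "normal_word (L i # t)"
  shows "act (M k) (L i # t) - contraction k (L i # t) = lmul (L i) (act (M k) t - contraction k t)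
    + (if k = - i then fscale (- of_int (2 * i)) (act (M 0) t - fscale Mv (sgl t 1))
       else fscale (- of_int (i - k)) (act (M (i + k)) t))"
proof (cases "k = - i")
  case True
  have "act (M k) (L i # t) - contraction k (L i # t)
      = lmul (L i) (act (M k) t) + fscale (- of_int (2 * i)) (act (M 0) t)
        + fscale (- (of_int (i ^ 3 - i) / 12) * cM) (sgl t 1)
        - (lmul (L i) (contraction k t) + fscale (contraction_coeff i) (sgl t 1))"
    using pbw_act_M_Cons[OF it, of k] contraction_Cons[OF it, of k] True by simp
  also have "\<dots> = lmul (L i) (act (M k) t - contraction k t)
      + fscale (- of_int (2 * i)) (act (M 0) t - fscale Mv (sgl t 1))"
    by (simp add: lmul_diff fun_eq_iff contraction_coeff_def algebra_simps)
  finally show ?thesis using True by simp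
next
  case False
  then show ?thesis
    using pbw_act_M_Cons[OF it, of k] contraction_Cons[OF it, of k]
    by (simp add: lmul_diff fun_eq_iff algebra_simps)
qed

lemma pbw_act_M_leading:
  "normal_word t \<Longrightarrow> supp_shorter (act (M 0) t - fscale Mv (sgl t 1)) (length t) \<and>
     (\<forall>k. k \<noteq> 0 \<longrightarrow> supp_shorter (act (M k) t - contraction k t) (length t - 1))"
proof (induction t)
  case Nil
  have "act (M k) [] = (if k = 0 then fscale Mv (sgl [] 1) else 0)" for k
    using ch_M[of k] by (simp add: fun_eq_iff sgl_def)
  then show ?case by (simp add: supp_shorter_def contraction_def)
next
  case (Cons c t)
  obtain i where i: "c = L i" "i \<noteq> 0"
    using undefined_is_L_nonzero Cons.prems by (auto simp: normal_word_Cons)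
  have it: "normal_word (L i # t)" and t: "normal_word t"
    using Cons.prems i by (simp_all add: normal_word_Cons)
  have IH_0: "supp_shorter (act (M 0) t - fscale Mv (sgl t 1)) (length t)"
    and IH_k: "\<And>k. k \<noteq> 0 \<Longrightarrow> supp_shorter (act (M k) t - contraction k t) (length t - 1)"
    using Cons.IH[OF t] by blast+
  have IH_shorter: "supp_shorter (act (M k) t) (length t)" if "k \<noteq> 0" for k
    using supp_shorter_add[OF supp_shorter_mono[OF IH_k[OF that]] supp_shorter_contraction[of k t]]
    by simp
  have M0: "supp_shorter (act (M 0) (c # t) - fscale Mv (sgl (c # t) 1)) (Suc (length t))"
    unfolding i pbw_act_M0_Cons_diff[OF it]
    by (intro supp_shorter_add supp_shorter_lmul supp_shorter_fscale
        supp_shorter_mono[OF IH_shorter[OF i(2)]]) (simp_all add: IH_0)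
  have Mk: "supp_shorter (act (M k) (c # t) - contraction k (c # t)) (length t)" if k: "k \<noteq> 0" for k
    unfolding i pbw_act_M_Cons_diff_contraction[OF it]
    using IH_k[OF k] IH_0 IH_shorter[of "i + k"]
    by (intro supp_shorter_add supp_shorter_lmul) (auto intro: supp_shorter_fscale)
  show ?case unfolding length_Cons diff_Suc_1 using M0 Mk by (intro conjI allI impI)
qed

lemma supp_shorter_pbw_act_M:
  assumes "k \<noteq> 0" and "normal_word t"
  shows "supp_shorter (act (M k) t) (length t)"
proof -
  have "supp_shorter (act (M k) t - contraction k t) (length t)"
    using conjunct2[OF pbw_act_M_leading[OF assms(2)], rule_format, OF assms(1)]
    by (rule supp_shorter_mono) simp
  from supp_shorter_add[OF this supp_shorter_contraction[of k]] show ?thesis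
    by (simp only: diff_add_cancel)
qed

lemma lin_ext_pbw_act_M_at_tail:
  assumes F: "fin_supp F" and normal: "\<forall>\<rho>\<in>supp F. normal_word \<rho> \<and> length \<rho> \<le> Suc (length t)"
    and it: "F (L i # t) \<noteq> 0"
  shows "lin_ext (act (M (- i))) F t
    = F (L i # t) * (contraction_coeff i * of_nat (count (mset (L i # t)) (L i)))"
proof -
  define X where "X = contraction_coeff i * of_nat (count (mset (L i # t)) (L i))"
  have it_normal: "normal_word (L i # t)" using normal it by simp
  then have i: "i \<noteq> 0" using ch_L0 by (auto simp: normal_word_Cons)
  have act_at_t: "act (M (- i)) \<rho> t = (if \<rho> = L i # t then X else 0)" if \<rho>: "F \<rho> \<noteq> 0" for \<rho>
  proof -
    have \<rho>_normal: "normal_word \<rho>" and len: "length \<rho> \<le> Suc (length t)" using normal \<rho> by auto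
    have "supp_shorter (act (M (- i)) \<rho> - contraction (- i) \<rho>) (length \<rho> - 1)"
      using pbw_act_M_leading[OF \<rho>_normal] i by simp
    moreover have "\<not> length t < length \<rho> - 1" using len by simp
    ultimately have "(act (M (- i)) \<rho> - contraction (- i) \<rho>) t = 0"
      unfolding supp_shorter_def by blast
    then have "act (M (- i)) \<rho> t = contraction (- i) \<rho> t" by simp
    also have "\<dots> = (if \<rho> = L i # t then X else 0)"
    proof (cases "L i \<in> set \<rho> \<and> t = remove1 (L i) \<rho>")
      case True
      then have "\<rho> = L i # t" using normal_word_eq_if_remove1_eq[OF \<rho>_normal it_normal] by auto
      then show ?thesis by (simp add: contraction_def sgl_def X_def)
    qed (auto simp: contraction_def sgl_def X_def)
    finally show ?thesis .
  qed
  have "lin_ext (act (M (- i))) F t = (\<Sum>\<rho>\<in>supp F. F \<rho> * act (M (- i)) \<rho> t)"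
    by (simp add: lin_ext_def)
  also have "\<dots> = (\<Sum>\<rho>\<in>supp F. if \<rho> = L i # t then F (L i # t) * X else 0)"
    by (rule sum.cong) (simp_all add: act_at_t)
  also have "\<dots> = F (L i # t) * X"
    using F it by (simp add: fin_supp_def)
  finally show ?thesis unfolding X_def .
qed

text \<open>With \<open>L\<^sub>i\<close> the first letter of a longest monomial \<open>\<sigma>\<close> of \<open>F\<close>, \<open>k = -i\<close> works: the coefficient
  of \<open>\<sigma>\<close> with \<open>L\<^sub>i\<close> removed is a nonzero multiple of \<open>F \<sigma>\<close>.\<close>
lemma exists_M_lowering:
  assumes coeff: "\<And>i. i \<noteq> 0 \<Longrightarrow> contraction_coeff i \<noteq> 0"
    and F: "fin_supp F" and normal: "\<forall>\<rho>\<in>supp F. normal_word \<rho>"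
    and short: "supp_shorter F (Suc (Suc r))" and not_short: "\<not> supp_shorter F (Suc r)"
  shows "\<exists>k. lin_ext (act (M k)) F \<noteq> 0 \<and> supp_shorter (lin_ext (act (M k)) F) (Suc r)"
proof -
  from not_short obtain \<sigma> where \<sigma>: "F \<sigma> \<noteq> 0" "\<not> length \<sigma> < Suc r"
    unfolding supp_shorter_def by blast
  moreover have "length \<sigma> < Suc (Suc r)"
    using short \<sigma>(1) unfolding supp_shorter_def by blast
  ultimately obtain c t where ct: "\<sigma> = c # t" "length t = r"
    by (cases \<sigma>) auto
  have "normal_word (c # t)" using normal \<sigma>(1) ct by auto
  then have "ch c = None" by (simp add: normal_word_Cons)
  then obtain i where i: "c = L i" "i \<noteq> 0" using undefined_is_L_nonzero by blast
  have lengths: "\<forall>\<rho>\<in>supp F. normal_word \<rho> \<and> length \<rho> \<le> Suc (length t)"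
    using normal short ct(2) by (auto simp: supp_shorter_def less_Suc_eq_le)
  have "lin_ext (act (M (- i))) F t \<noteq> 0"
    using lin_ext_pbw_act_M_at_tail[OF F lengths] \<sigma>(1) ct i coeff[OF i(2)]
    by (simp del: of_nat_Suc)
  then have "lin_ext (act (M (- i))) F \<noteq> 0" by auto
  moreover have "supp_shorter (lin_ext (act (M (- i))) F) (Suc r)"
    unfolding supp_shorter_def
  proof (intro allI impI)
    fix \<rho> assume "lin_ext (act (M (- i))) F \<rho> \<noteq> 0"
    then obtain \<rho>' where \<rho>': "F \<rho>' \<noteq> 0" and "act (M (- i)) \<rho>' \<rho> \<noteq> 0"
      using supp_lin_ext by fastforce
    then have "length \<rho> < length \<rho>'"
      using supp_shorter_pbw_act_M[of "- i" \<rho>'] i(2) normal unfolding supp_shorter_def by simp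
    also have "length \<rho>' \<le> Suc r" using short \<rho>' unfolding supp_shorter_def less_Suc_eq_le by blast
    finally show "length \<rho> < Suc r" .
  qed
  ultimately show ?thesis by blast
qed

end

section \<open>Irreducibility\<close>

definition tens_submodule :: "(gen list \<Rightarrow> 'a::field) set \<Rightarrow> bool" where
  "tens_submodule W \<longleftrightarrow> W \<subseteq> Tens
     \<and> (\<forall>f\<in>W. \<forall>g\<in>W. (\<lambda>v. f v + g v) \<in> W)
     \<and> (\<forall>f\<in>W. \<forall>c. (\<lambda>v. c * f v) \<in> W)
     \<and> (\<forall>f\<in>W. \<forall>x. lmul x f \<in> W)"

lemma massive_irreducible_iff:
  "massive_irreducible Mv s cL cM \<longleftrightarrow> Nsub Mv s cL cM \<noteq> Tens \<and>
     (\<forall>W. Nsub Mv s cL cM \<subseteq> W \<and> tens_submodule W \<longrightarrow> W = Nsub Mv s cL cM \<or> W = Tens)"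
  by (auto simp: massive_irreducible_def tens_submodule_def)

lemma tens_submodule_ind_kernel: "tens_submodule (ind_kernel ch)"
  unfolding tens_submodule_def
  by (auto simp: ind_kernel_def Tens_iff_fin_supp intro: spanS.add spanS.smul ind_kernel_lmul[unfolded ind_kernel_def]
      fin_supp_ind_kernel[unfolded ind_kernel_def])

context
  fixes W :: "(gen list \<Rightarrow> 'a::field) set"
  assumes W: "tens_submodule W"
begin

lemma tens_submodule_fin_supp: "f \<in> W \<Longrightarrow> fin_supp f"
  using W by (auto simp: tens_submodule_def Tens_iff_fin_supp)

lemma tens_submodule_add: "f \<in> W \<Longrightarrow> g \<in> W \<Longrightarrow> (\<lambda>v. f v + g v) \<in> W"
  using W by (simp add: tens_submodule_def)

lemma tens_submodule_smult: "f \<in> W \<Longrightarrow> (\<lambda>v. c * f v) \<in> W"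
  using W by (simp add: tens_submodule_def)

lemma tens_submodule_fscale: "f \<in> W \<Longrightarrow> fscale c f \<in> W"
  unfolding fscale_def by (rule tens_submodule_smult)

lemma tens_submodule_diff:
  assumes "f \<in> W" and "g \<in> W"
  shows "f - g \<in> W"
proof -
  have "(\<lambda>v. f v + (\<lambda>v. (-1) * g v) v) \<in> W"
    using assms by (intro tens_submodule_add tens_submodule_smult)
  then show ?thesis by (simp only: fun_diff_def mult_minus1 diff_conv_add_uminus)
qed

lemma tens_submodule_lmul: "f \<in> W \<Longrightarrow> lmul x f \<in> W"
  using W by (simp add: tens_submodule_def)

lemma tens_submodule_eq_Tens:
  assumes vacuum: "sgl [] 1 \<in> W"
  shows "W = Tens"
proof
  show "W \<subseteq> Tens" using W by (simp add: tens_submodule_def)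
next
  have words: "sgl w 1 \<in> W" for w
  proof (induction w)
    case (Cons g w)
    show ?case using tens_submodule_lmul[OF Cons.IH, of g] unfolding lmul_sgl .
  qed (rule vacuum)
  show "Tens \<subseteq> W"
  proof
    fix f :: "gen list \<Rightarrow> 'a" assume "f \<in> Tens"
    then have f: "finite (supp f)" by (simp add: Tens_iff_fin_supp fin_supp_def)
    have "(\<lambda>v. \<Sum>w\<in>R. f w * sgl w 1 v) \<in> W" if "finite R" for R
      using that
    proof (induction R rule: finite_induct)
      case empty
      then show ?case using tens_submodule_fscale[OF vacuum, of 0] by (simp add: fscale_def)
    next
      case (insert w R)
      then show ?case
        using W words by (simp add: tens_submodule_def)
    qed
    then have "lin_ext (\<lambda>w. sgl w 1) f \<in> W" using f by (simp add: lin_ext_def)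
    then show "f \<in> W" using f by (simp add: lin_ext_sgl_basis fin_supp_def)
  qed
qed

end

lemma (in bms_character) ind_kernel_ne_Tens: "ind_kernel ch \<noteq> Tens"
proof
  assume "ind_kernel ch = Tens"
  then have "normal_form ch (sgl [] 1) = 0"
    using ind_kernel_iff_normal_form_eq_0 by (simp add: Tens_iff_fin_supp)
  then show False by (simp only: normal_form_vacuum sgl_one_neq_zero)
qed

lemma massive_character_chi: "massive_character (chi Mv s cL cM) Mv cM"
proof unfold_locales
  fix g assume "chi Mv s cL cM g = None"
  then show "\<exists>i. g = L i" by (cases g) auto
next
  fix x y g and a :: 'a
  assume "chi Mv s cL cM x \<noteq> None" "chi Mv s cL cM y \<noteq> None" "(g, a) \<in> set (brkc x y)" "a \<noteq> 0"
  then show "chi Mv s cL cM g \<noteq> None"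
    by (cases x; cases y) (auto split: if_splits)
next
  fix x y
  assume "chi Mv s cL cM x \<noteq> None" "chi Mv s cL cM y \<noteq> None"
  then show "lin_comb (\<lambda>g. case chi Mv s cL cM g of Some c \<Rightarrow> c | None \<Rightarrow> 0) (brkc x y) = 0"
    by (cases x; cases y) (auto split: if_splits)
qed auto

text \<open>For singular \<open>Mv\<close>, \<open>[L\<^sub>n, M\<^bsub>-n\<^esub>]\<close> acts by \<open>0\<close> on the vacuum, so the character extends by
  \<open>L\<^sub>n \<mapsto> 0\<close>.\<close>
lemma bms_character_chi_upd:
  assumes n: "n > 0" and singular: "Mv + (of_nat n ^ 2 - 1) / 24 * cM = (0::'a::field_char_0)"
  shows "bms_character ((chi Mv s cL cM)(L (int n) := Some 0))"
proof unfold_locales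
  let ?ch = "(chi Mv s cL cM)(L (int n) := Some 0)"
  show "\<exists>i. g = L i" if "?ch g = None" for g
    using that by (cases g) (auto split: if_splits)
  fix x y
  assume xy: "?ch x \<noteq> None" "?ch y \<noteq> None"
  show "?ch g \<noteq> None" if "(g, a) \<in> set (brkc x y :: (gen \<times> 'a) list)" "a \<noteq> 0" for g a
    using xy that n by (cases x; cases y) (auto split: if_splits)
  have "2 * of_int (int n) * Mv + of_int (int n ^ 3 - int n) / 12 * cM
      = 2 * of_nat n * (Mv + (of_nat n ^ 2 - 1) / 24 * cM)"
    by (simp add: field_simps power3_eq_cube power2_eq_square)
  then have pairing: "2 * of_int (int n) * Mv + of_int (int n ^ 3 - int n) / 12 * cM = 0"
    using singular by simp
  have solve_index: "a + b = 0 \<Longrightarrow> a = - b" for a b :: int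
    by simp
  show "lin_comb (\<lambda>g. case ?ch g of Some c \<Rightarrow> c | None \<Rightarrow> 0) (brkc x y) = 0"
    using xy n pairing by (cases x; cases y) (auto split: if_splits dest!: solve_index simp: algebra_simps)
qed

text \<open>The module induced from the extended character is a proper quotient of the massive module.\<close>
lemma massive_not_irreducible_if_singular:
  assumes n: "n > 0" and singular: "Mv + (of_nat n ^ 2 - 1) / 24 * cM = (0::'a::field_char_0)"
  shows "\<not> massive_irreducible Mv s cL cM"
proof
  assume irreducible: "massive_irreducible Mv s cL cM"
  define ch' where "ch' = (chi Mv s cL cM)(L (int n) := Some 0)"
  interpret chi: massive_character "chi Mv s cL cM" Mv cM by (rule massive_character_chi)
  interpret ch': bms_character ch' unfolding ch'_def using n singular by (rule bms_character_chi_upd)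
  have chi_L: "chi Mv s cL cM (L (int n)) = None" using n by simp
  have ch'_ext: "ch' h = Some c" if "chi Mv s cL cM h = Some c" for h c
    using that chi_L by (auto simp: ch'_def)
  have "ind_kernel_gens (chi Mv s cL cM) \<subseteq> ind_kernel_gens ch'"
    unfolding mem_ind_kernel_gens subset_iff by (blast dest: ch'_ext)
  then have "Nsub Mv s cL cM \<subseteq> ind_kernel ch'"
    unfolding Nsub_eq_ind_kernel ind_kernel_def by (rule spanS_mono)
  then have "ind_kernel ch' = Nsub Mv s cL cM \<or> ind_kernel ch' = Tens"
    using irreducible tens_submodule_ind_kernel by (auto simp: massive_irreducible_iff)
  moreover have "ind_kernel ch' \<noteq> Tens" by (rule ch'.ind_kernel_ne_Tens)
  moreover have "sgl [L (int n)] 1 \<in> ind_kernel ch'"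
  proof -
    have "ch' (L (int n)) = Some 0" by (simp add: ch'_def)
    then have "sgl ([] @ [L (int n)]) 1 - sgl [] 0 \<in> ind_kernel_gens ch'"
      unfolding mem_ind_kernel_gens by blast
    then show ?thesis by (simp add: ind_kernel_def spanS.base sgl_def fun_diff_def)
  qed
  moreover have "sgl [L (int n)] 1 \<notin> Nsub Mv s cL cM"
  proof
    assume "sgl [L (int n)] 1 \<in> Nsub Mv s cL cM"
    then have "normal_form (chi Mv s cL cM) (sgl [L (int n)] 1) = 0"
      unfolding Nsub_eq_ind_kernel by (rule chi.normal_form_ind_kernel)
    moreover have "normal_form (chi Mv s cL cM) (sgl [L (int n)] 1) = sgl [L (int n)] 1"
      using chi_L by (simp add: normal_form_sgl)
    ultimately show False using sgl_one_neq_zero by metis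
  qed
  ultimately show False by auto
qed

context massive_character
begin

lemma normal_form_in_tens_submodule:
  assumes W: "tens_submodule W" and kernel: "ind_kernel ch \<subseteq> W" and f: "f \<in> W"
  shows "normal_form ch f \<in> W"
  using tens_submodule_diff[OF W f, of "f - normal_form ch f"] kernel
    diff_normal_form_in_ind_kernel[OF tens_submodule_fin_supp[OF W f]] by auto

lemma tens_submodule_contains_vacuum_bounded:
  assumes coeff: "\<And>i. i \<noteq> 0 \<Longrightarrow> contraction_coeff i \<noteq> 0"
    and W: "tens_submodule W" and kernel: "ind_kernel ch \<subseteq> W"
  shows "f \<in> W \<Longrightarrow> normal_form ch f \<noteq> 0 \<Longrightarrow> supp_shorter (normal_form ch f) (Suc r) \<Longrightarrow> sgl [] 1 \<in> W"
proof (induction r arbitrary: f)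
  case 0
  define a where "a = normal_form ch f []"
  have "normal_form ch f = fscale a (sgl [] 1)"
    using "0.prems"(3) by (auto simp: fun_eq_iff supp_shorter_def sgl_def a_def)
  moreover have "a \<noteq> 0" using "0.prems"(2) calculation by (auto simp: fun_eq_iff sgl_def)
  ultimately have "sgl [] 1 = fscale (1 / a) (normal_form ch f)" by (simp add: fun_eq_iff)
  then show ?case
    using tens_submodule_fscale[OF W normal_form_in_tens_submodule[OF W kernel "0.prems"(1)], of "1 / a"]
    by (simp only:)
next
  case (Suc r)
  show ?case
  proof (cases "supp_shorter (normal_form ch f) (Suc r)")
    case True
    then show ?thesis using Suc by blast
  next
    case False
    have fin: "fin_supp f" using tens_submodule_fin_supp[OF W Suc.prems(1)] .
    have normal: "\<forall>\<rho>\<in>supp (normal_form ch f). normal_word \<rho>"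
      using normal_word_normal_form[OF fin] by simp
    obtain k where k: "lin_ext (act (M k)) (normal_form ch f) \<noteq> 0"
        "supp_shorter (lin_ext (act (M k)) (normal_form ch f)) (Suc r)"
      using exists_M_lowering[OF coeff fin_supp_normal_form[OF fin] normal Suc.prems(3) False] by blast
    have nf_eq: "normal_form ch (lmul (M k) f) = lin_ext (act (M k)) (normal_form ch f)"
      by (rule normal_form_lmul[OF fin])
    show ?thesis
    proof (rule Suc.IH)
      show "lmul (M k) f \<in> W" by (rule tens_submodule_lmul[OF W Suc.prems(1)])
      show "normal_form ch (lmul (M k) f) \<noteq> 0" unfolding nf_eq by (rule k(1))
      show "supp_shorter (normal_form ch (lmul (M k) f)) (Suc r)" unfolding nf_eq by (rule k(2))
    qed
  qed
qed

lemma tens_submodule_contains_vacuum: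
  assumes coeff: "\<And>i. i \<noteq> 0 \<Longrightarrow> contraction_coeff i \<noteq> 0"
    and W: "tens_submodule W" and kernel: "ind_kernel ch \<subseteq> W"
    and f: "f \<in> W" "f \<notin> ind_kernel ch"
  shows "sgl [] 1 \<in> W"
proof -
  have fin: "fin_supp (normal_form ch f)"
    using fin_supp_normal_form[OF tens_submodule_fin_supp[OF W f(1)]] .
  have "finite (length ` supp (normal_form ch f))"
    using fin by (simp add: fin_supp_def)
  then obtain r where "\<forall>n\<in>length ` supp (normal_form ch f). n \<le> r"
    using finite_nat_set_iff_bounded_le by blast
  then have "supp_shorter (normal_form ch f) (Suc r)"
    by (auto simp: supp_shorter_def less_Suc_eq_le)
  moreover have "normal_form ch f \<noteq> 0"
    using f ind_kernel_iff_normal_form_eq_0 tens_submodule_fin_supp[OF W f(1)] by blast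
  ultimately show ?thesis
    using tens_submodule_contains_vacuum_bounded[OF coeff W kernel f(1)] by blast
qed

end

lemma massive_irreducible_if_nonsingular:
  assumes nonsingular: "\<forall>n::nat. n > 0 \<longrightarrow> Mv + (of_nat n ^ 2 - 1) / 24 * cM \<noteq> (0::'a::field_char_0)"
  shows "massive_irreducible Mv s cL cM"
proof -
  interpret chi: massive_character "chi Mv s cL cM" Mv cM by (rule massive_character_chi)
  have coeff: "chi.contraction_coeff i \<noteq> 0" if "i \<noteq> 0" for i
  proof -
    have "Mv + (of_nat (nat \<bar>i\<bar>) ^ 2 - 1) / 24 * cM \<noteq> 0"
      using nonsingular[rule_format, of "nat \<bar>i\<bar>"] that by simp
    then show ?thesis unfolding chi.contraction_coeff_eq using that by simp
  qed
  show ?thesis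
    unfolding massive_irreducible_iff Nsub_eq_ind_kernel
  proof (intro conjI allI impI)
    show "ind_kernel (chi Mv s cL cM) \<noteq> Tens" by (rule chi.ind_kernel_ne_Tens)
    fix W assume W: "ind_kernel (chi Mv s cL cM) \<subseteq> W \<and> tens_submodule W"
    show "W = ind_kernel (chi Mv s cL cM) \<or> W = Tens"
    proof (cases "W \<subseteq> ind_kernel (chi Mv s cL cM)")
      case True
      then show ?thesis using W by blast
    next
      case False
      then obtain f where "f \<in> W" "f \<notin> ind_kernel (chi Mv s cL cM)" by blast
      then have "sgl [] 1 \<in> W"
        using W by (intro chi.tens_submodule_contains_vacuum[OF coeff]) simp_all
      then show ?thesis using tens_submodule_eq_Tens W by blast
    qed
  qed
qed

theorem theorem3p8:
  fixes Mv s cL cM :: "'a::field_char_0"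
  shows "massive_irreducible Mv s cL cM \<longleftrightarrow>
    (\<forall>n::nat. n > 0 \<longrightarrow> Mv + (of_nat n ^ 2 - 1) / 24 * cM \<noteq> 0)"
proof
  show "\<forall>n::nat. n > 0 \<longrightarrow> Mv + (of_nat n ^ 2 - 1) / 24 * cM \<noteq> 0"
    if "massive_irreducible Mv s cL cM"
    using that massive_not_irreducible_if_singular by blast
qed (rule massive_irreducible_if_nonsingular)

end
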